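(* The ideal $I^{(k,r)}\subset V$ is stable under the action of $\mathcal H_n^{(k,r)}$ on $V$, i.e. it is a subrepresentation.
   Context: Let $\tilde{\mathbb K}=\mathbb C(t^{1/2},q)$. The double affine Hecke algebra $\mathcal H_n$ of type $GL_n$ is the $\tilde{\mathbb K}$-algebra generated by $X_i^{\pm1},Y_i^{\pm1}$ ($1\le i\le n$), $T_j$ ($1\le j\le n-1$) with relations: $X$'s commute, $Y$'s commute; $(T_i-t^{1/2})(T_i+t^{-1/2})=0$; braid relations for the $T_i$; $T_iX_iT_i=X_{i+1}$; $T_iX_j=X_jT_i$ ($j\ne i,i+1$); $T_i^{-1}Y_iT_i^{-1}=Y_{i+1}$; $T_iY_j=Y_jT_i$ ($j\ne i,i+1$); $Y_2^{-1}X_1Y_2X_1^{-1}=T_1^2$; $Y_i\tilde X=q\tilde XY_i$ ($\tilde X=\prod X_i$); $X_i\tilde Y=q^{-1}\tilde YX_i$ ($\tilde Y=\prod Y_i$). It acts on $U=\tilde{\mathbb K}[x_1^{\pm1},\dots,x_n^{\pm1}]$ by $X_i\mapsto x_i$, $T_i\mapsto t^{1/2}s_i+\frac{t^{1/2}-t^{-1/2}}{x_i/x_{i+1}-1}(s_i-1)$, $Y_i\mapsto T_i\cdots T_{n-1}\omega T_1^{-1}\cdots T_{i-1}^{-1}$, with $s_i$ swapping $x_i,x_{i+1}$ and $(\omega f)(x_1,\dots,x_n)=f(qx_n,x_1,\dots,x_{n-1})$. Fix integers $n\ge2$, $1\le k\le n-1$, $r\ge2$, $g=\gcd(k+1,r-1)$,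 $\tau=e^{2\pi\sqrt{-1}/(r-1)}$, and specialize $(\ast)$: $t=u^{(r-1)/g}$, $q=\tau u^{-(k+1)/g}$. $\mathbb K$, $\mathcal H_n^{(k,r)}$, $V=\mathbb K[x_1^{\pm1},\dots,x_n^{\pm1}]$ are the images under $(\ast)$ of the elements of $\tilde{\mathbb K}$, $\mathcal H_n$, $U$ regular at $(\ast)$. $Z^{(k,r)}$ is the set of $z\in\mathbb K^n$ for which there exist distinct $i_1,\dots,i_{k+1}\in\{1,\dots,n\}$ and $s_1,\dots,s_k\in\mathbb Z_{\ge0}$ with $z_{i_{a+1}}=z_{i_a}tq^{s_a}$ ($1\le a\le k$), $\sum_as_a\le r-2$, and $i_a<i_{a+1}$ whenever $s_a=0$; $I^{(k,r)}=\{f\in V:f(z)=0\ \forall z\in Z^{(k,r)}\}$. *)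

theory Defs
  imports Complex_Main "HOL-Library.Poly_Mapping" "HOL-Computational_Algebra.Polynomial"
    "HOL-Computational_Algebra.Fraction_Field"
begin

text \<open>A Laurent monomial is an exponent vector (nat =>0 int); a Laurent polynomial
  with coefficients in 'a is a finitely supported map from exponent vectors to 'a.
  With Poly_Mapping's convolution product this is the ring 'a[x_1^{+-1}, x_2^{+-1}, ...].\<close>

type_synonym 'a laurent = "(nat \<Rightarrow>\<^sub>0 int) \<Rightarrow>\<^sub>0 'a"

definition evec :: "nat \<Rightarrow> (nat \<Rightarrow>\<^sub>0 int)" where
  "evec i = Poly_Mapping.single i 1"

definition lconst :: "'a::comm_ring_1 \<Rightarrow> 'a laurent" where
  "lconst c = Poly_Mapping.single 0 c"

definition lvar :: "nat \<Rightarrow> 'a::comm_ring_1 laurent" where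
  "lvar i = Poly_Mapping.single (evec i) 1"

definition lvar_inv :: "nat \<Rightarrow> 'a::comm_ring_1 laurent" where
  "lvar_inv i = Poly_Mapping.single (- evec i) 1"

definition laurentV :: "nat \<Rightarrow> 'a::comm_ring_1 laurent set" where
  "laurentV n = {f. \<forall>\<alpha>\<in>Poly_Mapping.keys f. Poly_Mapping.keys \<alpha> \<subseteq> {1..n}}"

text \<open>evaluation f(z) at a point z (used at points with nonzero coordinates)\<close>
definition leval :: "(nat \<Rightarrow> 'a::field) \<Rightarrow> 'a laurent \<Rightarrow> 'a" where
  "leval z f = (\<Sum>\<alpha>\<in>Poly_Mapping.keys f.
      Poly_Mapping.lookup f \<alpha> * (\<Prod>i\<in>Poly_Mapping.keys \<alpha>. z i powi Poly_Mapping.lookup \<alpha> i))"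

text \<open>monomial substitution x_j |-> c_j * x_(sigma j), extended as a ring map\<close>
definition msubst :: "(nat \<Rightarrow> 'a::field) \<Rightarrow> (nat \<Rightarrow> nat) \<Rightarrow> 'a laurent \<Rightarrow> 'a laurent" where
  "msubst c \<sigma> f = (\<Sum>\<alpha>\<in>Poly_Mapping.keys f.
      Poly_Mapping.single
        (\<Sum>j\<in>Poly_Mapping.keys \<alpha>. Poly_Mapping.single (\<sigma> j) (Poly_Mapping.lookup \<alpha> j))
        (Poly_Mapping.lookup f \<alpha> * (\<Prod>j\<in>Poly_Mapping.keys \<alpha>. c j powi Poly_Mapping.lookup \<alpha> j)))"

section \<open>The polynomial representation of the DAHA (parameters st = t^(1/2), q)\<close>

definition swp :: "nat \<Rightarrow> 'a::field laurent \<Rightarrow> 'a laurent" where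
  "swp i f = msubst (\<lambda>_. 1) (\<lambda>j. if j = i then i + 1 else if j = i + 1 then i else j) f"

text \<open>(omega f)(x_1,...,x_n) = f(q x_n, x_1, ..., x_(n-1))\<close>
definition omega :: "'a::field \<Rightarrow> nat \<Rightarrow> 'a laurent \<Rightarrow> 'a laurent" where
  "omega q n f = msubst (\<lambda>j. if j = 1 then q else 1)
                        (\<lambda>j. if j = 1 then n else if 2 \<le> j \<and> j \<le> n then j - 1 else j) f"

text \<open>T_i f = st s_i f + (st - st^(-1)) / (x_i/x_(i+1) - 1) (s_i f - f), i.e. the unique g
  with (x_i x_(i+1)^(-1) - 1)(g - st s_i f) = (st - st^(-1)) (s_i f - f).\<close>
definition heckeT :: "'a::field \<Rightarrow> nat \<Rightarrow> 'a laurent \<Rightarrow> 'a laurent" where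
  "heckeT st i f = (THE g. (lvar i * lvar_inv (i + 1) - 1) * (g - lconst st * swp i f)
                          = lconst (st - inverse st) * (swp i f - f))"

definition heckeTinv :: "'a::field \<Rightarrow> nat \<Rightarrow> 'a laurent \<Rightarrow> 'a laurent" where
  "heckeTinv st i f = (THE g. heckeT st i g = f)"

definition daha_Y :: "'a::field \<Rightarrow> 'a \<Rightarrow> nat \<Rightarrow> nat \<Rightarrow> 'a laurent \<Rightarrow> 'a laurent" where
  "daha_Y st q n i f = foldr (heckeT st) [i..<n] (omega q n (foldr (heckeTinv st) [1..<i] f))"

definition daha_Yinv :: "'a::field \<Rightarrow> 'a \<Rightarrow> nat \<Rightarrow> nat \<Rightarrow> 'a laurent \<Rightarrow> 'a laurent" where
  "daha_Yinv st q n i f = (THE g. daha_Y st q n i g = f)"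

text \<open>Let a = (r-1)/g, b = (k+1)/g, v = u^(1/2) (so t^(1/2) = v^a, q = tau v^(-2b)) and
  d = gcd a (2b).  The field K = C(v^a, v^(2b)) = C(w) with w = v^d, a rational function
  field in one variable; we realise it as the type complex poly fract with w = X.\<close>

type_synonym K = "complex poly fract"

definition wvar :: K where "wvar = Fract [:0, 1:] 1"

definition spec_a :: "nat \<Rightarrow> nat \<Rightarrow> nat" where
  "spec_a k r = (r - 1) div gcd (k + 1) (r - 1)"

definition spec_b :: "nat \<Rightarrow> nat \<Rightarrow> nat" where
  "spec_b k r = (k + 1) div gcd (k + 1) (r - 1)"

definition spec_d :: "nat \<Rightarrow> nat \<Rightarrow> nat" where
  "spec_d k r = gcd (spec_a k r) (2 * spec_b k r)"

definition spec_tau :: "nat \<Rightarrow> K" where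
  "spec_tau r = Fract [:cis (2 * pi / real (r - 1)):] 1"

definition spec_st :: "nat \<Rightarrow> nat \<Rightarrow> K" where
  "spec_st k r = wvar ^ (spec_a k r div spec_d k r)"

definition spec_t :: "nat \<Rightarrow> nat \<Rightarrow> K" where
  "spec_t k r = (spec_st k r) ^ 2"

definition spec_q :: "nat \<Rightarrow> nat \<Rightarrow> K" where
  "spec_q k r = spec_tau r * (inverse wvar) ^ (2 * spec_b k r div spec_d k r)"

definition wheelZ :: "nat \<Rightarrow> nat \<Rightarrow> nat \<Rightarrow> (nat \<Rightarrow> K) set" where
  "wheelZ n k r = {z. (\<forall>j\<in>{1..n}. z j \<noteq> 0) \<and>
     (\<exists>ii s. (\<forall>a\<in>{1..k+1}. ii a \<in> {1..n}) \<and> inj_on ii {1..k+1} \<and>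
        (\<forall>a\<in>{1..k}. z (ii (a + 1)) = z (ii a) * spec_t k r * spec_q k r ^ (s a :: nat) \<and>
                     (s a = 0 \<longrightarrow> ii a < ii (a + 1))) \<and>
        (\<Sum>a=1..k. s a) \<le> r - 2)}"

definition idealI :: "nat \<Rightarrow> nat \<Rightarrow> nat \<Rightarrow> K laurent set" where
  "idealI n k r = {f \<in> laurentV n. \<forall>z\<in>wheelZ n k r. leval z f = 0}"

end

theory Submission
  imports Defs "HOL-Combinatorics.Transposition"
begin

instance fract :: ("{idom, ring_char_0}") ring_char_0
  by standard (auto intro!: injI simp: of_nat_fract eq_fract)

instance fract :: ("{idom, ring_char_0}") field_char_0 ..

definition monom_eval :: "(nat \<Rightarrow> 'a::field) \<Rightarrow> (nat \<Rightarrow>\<^sub>0 int) \<Rightarrow> 'a" where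
  "monom_eval z \<alpha> = (\<Prod>i\<in>Poly_Mapping.keys \<alpha>. z i powi Poly_Mapping.lookup \<alpha> i)"

lemma leval_monom_eval:
  "leval z f = (\<Sum>\<alpha>\<in>Poly_Mapping.keys f. Poly_Mapping.lookup f \<alpha> * monom_eval z \<alpha>)"
  by (simp add: leval_def monom_eval_def)

lemma monom_eval_superset:
  assumes "finite S" "Poly_Mapping.keys \<alpha> \<subseteq> S"
  shows "monom_eval z \<alpha> = (\<Prod>i\<in>S. z i powi Poly_Mapping.lookup \<alpha> i)"
  unfolding monom_eval_def using assms
  by (intro prod.mono_neutral_left) (auto simp: in_keys_iff)

lemma leval_superset:
  assumes "finite S" "Poly_Mapping.keys f \<subseteq> S"
  shows "leval z f = (\<Sum>\<alpha>\<in>S. Poly_Mapping.lookup f \<alpha> * monom_eval z \<alpha>)"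
  unfolding leval_monom_eval using assms
  by (intro sum.mono_neutral_left) (auto simp: in_keys_iff)

lemma monom_eval_zero [simp]: "monom_eval z 0 = 1"
  by (simp add: monom_eval_def)

lemma monom_eval_add:
  assumes "\<forall>i. z i \<noteq> 0"
  shows "monom_eval z (\<alpha> + \<beta>) = monom_eval z \<alpha> * monom_eval z \<beta>"
proof -
  let ?S = "Poly_Mapping.keys \<alpha> \<union> Poly_Mapping.keys \<beta>"
  have "monom_eval z (\<alpha> + \<beta>) = (\<Prod>i\<in>?S. z i powi Poly_Mapping.lookup (\<alpha> + \<beta>) i)"
    by (rule monom_eval_superset) (auto simp: keys_add)
  also have "\<dots> = (\<Prod>i\<in>?S. z i powi Poly_Mapping.lookup \<alpha> i) * (\<Prod>i\<in>?S. z i powi Poly_Mapping.lookup \<beta> i)"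
    using assms by (simp add: lookup_add power_int_add prod.distrib)
  also have "\<dots> = monom_eval z \<alpha> * monom_eval z \<beta>"
    by (subst (1 2) monom_eval_superset[where S = ?S]) auto
  finally show ?thesis .
qed

lemma leval_add: "leval z (f + g) = leval z f + leval z g"
proof -
  let ?S = "Poly_Mapping.keys f \<union> Poly_Mapping.keys g"
  have "leval z (f + g) = (\<Sum>\<alpha>\<in>?S. Poly_Mapping.lookup (f + g) \<alpha> * monom_eval z \<alpha>)"
    by (rule leval_superset) (auto simp: keys_add)
  also have "\<dots> = leval z f + leval z g"
    by (subst (1 2) leval_superset[where S = ?S]) (auto simp: lookup_add distrib_right sum.distrib)
  finally show ?thesis .
qed

lemma leval_zero [simp]: "leval z 0 = 0"
  by (simp add: leval_def)

lemma leval_single: "leval z (Poly_Mapping.single \<alpha> v) = v * monom_eval z \<alpha>"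
  by (simp add: leval_monom_eval)

lemma leval_sum: "leval z (\<Sum>x\<in>A. F x) = (\<Sum>x\<in>A. leval z (F x))"
  by (induction A rule: infinite_finite_induct) (auto simp: leval_add)

lemma leval_uminus: "leval z (- f) = - leval z f"
  using leval_add[of z f "- f"] by (simp add: eq_neg_iff_add_eq_0 add.commute)

lemma leval_diff: "leval z (f - g) = leval z f - leval z g"
  using leval_add[of z f "- g"] leval_uminus[of z g] by simp

lemma poly_mapping_sum_single:
  "f = (\<Sum>\<alpha>\<in>Poly_Mapping.keys f. Poly_Mapping.single \<alpha> (Poly_Mapping.lookup f \<alpha>))"
  by (rule poly_mapping_eqI) (simp add: lookup_sum lookup_single when_def in_keys_iff)

lemma leval_mult:
  assumes "\<forall>i. z i \<noteq> 0"
  shows "leval z (f * g) = leval z f * leval z g"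
proof -
  let ?A = "Poly_Mapping.keys f" and ?B = "Poly_Mapping.keys g"
  let ?f = "Poly_Mapping.lookup f" and ?g = "Poly_Mapping.lookup g"
  have "f * g = (\<Sum>\<alpha>\<in>?A. Poly_Mapping.single \<alpha> (?f \<alpha>)) * (\<Sum>\<beta>\<in>?B. Poly_Mapping.single \<beta> (?g \<beta>))"
    by (subst (1) poly_mapping_sum_single, subst (1) poly_mapping_sum_single[of g]) simp
  also have "\<dots> = (\<Sum>\<alpha>\<in>?A. \<Sum>\<beta>\<in>?B. Poly_Mapping.single (\<alpha> + \<beta>) (?f \<alpha> * ?g \<beta>))"
    by (simp add: sum_product mult_single)
  finally have "leval z (f * g) = (\<Sum>\<alpha>\<in>?A. \<Sum>\<beta>\<in>?B. ?f \<alpha> * ?g \<beta> * monom_eval z (\<alpha> + \<beta>))"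
    by (simp add: leval_sum leval_single)
  also have "\<dots> = (\<Sum>\<alpha>\<in>?A. \<Sum>\<beta>\<in>?B. (?f \<alpha> * monom_eval z \<alpha>) * (?g \<beta> * monom_eval z \<beta>))"
    using assms by (simp add: monom_eval_add mult_ac)
  also have "\<dots> = leval z f * leval z g"
    by (simp add: leval_monom_eval sum_product)
  finally show ?thesis .
qed

lemma leval_one [simp]: "leval z 1 = 1"
  by (simp add: leval_monom_eval)

lemma leval_power: "\<forall>i. z i \<noteq> 0 \<Longrightarrow> leval z (f ^ m) = leval z f ^ m"
  by (induction m) (simp_all add: leval_mult)

lemma leval_lconst [simp]: "leval z (lconst c) = c"
  by (simp add: lconst_def leval_single)

lemma leval_lvar [simp]: "leval z (lvar i) = z i"
  by (simp add: lvar_def leval_single monom_eval_def evec_def)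

lemma leval_lvar_inv [simp]: "leval z (lvar_inv i) = inverse (z i)"
  by (simp add: lvar_inv_def leval_single monom_eval_def evec_def power_int_minus)

lemma leval_cong:
  assumes "\<forall>\<alpha>\<in>Poly_Mapping.keys f. \<forall>i\<in>Poly_Mapping.keys \<alpha>. z' i = z i"
  shows "leval z' f = leval z f"
  unfolding leval_monom_eval monom_eval_def using assms by (intro sum.cong prod.cong) auto

lemma monom_eval_rename:
  assumes "inj \<sigma>"
  shows "monom_eval z (\<Sum>j\<in>Poly_Mapping.keys \<alpha>. Poly_Mapping.single (\<sigma> j) (Poly_Mapping.lookup \<alpha> j))
         = (\<Prod>j\<in>Poly_Mapping.keys \<alpha>. z (\<sigma> j) powi Poly_Mapping.lookup \<alpha> j)"
proof -
  let ?\<beta> = "\<Sum>j\<in>Poly_Mapping.keys \<alpha>. Poly_Mapping.single (\<sigma> j) (Poly_Mapping.lookup \<alpha> j)"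
  have lookup_\<beta>: "Poly_Mapping.lookup ?\<beta> (\<sigma> j) = Poly_Mapping.lookup \<alpha> j" for j
    using assms by (simp add: lookup_sum lookup_single when_def inj_eq in_keys_iff)
  have "Poly_Mapping.keys ?\<beta> \<subseteq> \<sigma> ` Poly_Mapping.keys \<alpha>"
    using keys_sum[of "\<lambda>j. Poly_Mapping.single (\<sigma> j) (Poly_Mapping.lookup \<alpha> j)"] by auto
  then have "monom_eval z ?\<beta> = (\<Prod>i\<in>\<sigma> ` Poly_Mapping.keys \<alpha>. z i powi Poly_Mapping.lookup ?\<beta> i)"
    by (intro monom_eval_superset) simp_all
  also have "\<dots> = (\<Prod>j\<in>Poly_Mapping.keys \<alpha>. z (\<sigma> j) powi Poly_Mapping.lookup \<alpha> j)"
    using assms by (subst prod.reindex) (auto intro: inj_on_subset simp: lookup_\<beta>)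
  finally show ?thesis .
qed

lemma leval_msubst:
  assumes "inj \<sigma>"
  shows "leval z (msubst c \<sigma> f) = leval (\<lambda>j. c j * z (\<sigma> j)) f"
proof -
  have "leval z (msubst c \<sigma> f) = (\<Sum>\<alpha>\<in>Poly_Mapping.keys f. Poly_Mapping.lookup f \<alpha> *
      (\<Prod>j\<in>Poly_Mapping.keys \<alpha>. c j powi Poly_Mapping.lookup \<alpha> j) *
      (\<Prod>j\<in>Poly_Mapping.keys \<alpha>. z (\<sigma> j) powi Poly_Mapping.lookup \<alpha> j))"
    unfolding msubst_def leval_sum leval_single monom_eval_rename[OF assms] ..
  also have "\<dots> = leval (\<lambda>j. c j * z (\<sigma> j)) f"
    unfolding leval_monom_eval monom_eval_def
    by (simp add: power_int_mult_distrib prod.distrib mult.assoc)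
  finally show ?thesis .
qed

lemma poly_shifted_powi_sum:
  fixes c :: "'b \<Rightarrow> 'a::field" and E :: "'b \<Rightarrow> int"
  assumes shift: "\<forall>\<alpha>\<in>A. 0 \<le> E \<alpha> + int N" and y: "y \<noteq> 0"
  shows "poly (\<Sum>\<alpha>\<in>A. monom (c \<alpha>) (nat (E \<alpha> + int N))) y = y ^ N * (\<Sum>\<alpha>\<in>A. c \<alpha> * y powi E \<alpha>)"
proof -
  have "c \<alpha> * y ^ nat (E \<alpha> + int N) = y ^ N * (c \<alpha> * y powi E \<alpha>)" if "\<alpha> \<in> A" for \<alpha>
  proof -
    have "y ^ nat (E \<alpha> + int N) = y powi (E \<alpha> + int N)"
      using shift that by (simp add: power_int_def)
    then show ?thesis
      using y by (simp add: power_int_add)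
  qed
  then show ?thesis
    unfolding poly_sum poly_monom sum_distrib_left by (rule sum.cong[OF refl])
qed

lemma coeff_shifted_powi_sum:
  fixes c :: "'b \<Rightarrow> 'a::field" and E :: "'b \<Rightarrow> int"
  assumes "finite A" "inj_on E A" "\<forall>\<alpha>\<in>A. 0 \<le> E \<alpha> + int N" "\<alpha> \<in> A"
  shows "coeff (\<Sum>\<beta>\<in>A. monom (c \<beta>) (nat (E \<beta> + int N))) (nat (E \<alpha> + int N)) = c \<alpha>"
proof -
  have "(if nat (E \<beta> + int N) = nat (E \<alpha> + int N) then c \<beta> else 0) = (if \<beta> = \<alpha> then c \<beta> else 0)"
    if "\<beta> \<in> A" for \<beta>
    using assms that by (auto simp: eq_nat_nat_iff dest: inj_onD)
  then have "(\<Sum>\<beta>\<in>A. coeff (monom (c \<beta>) (nat (E \<beta> + int N))) (nat (E \<alpha> + int N)))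
      = (\<Sum>\<beta>\<in>A. if \<beta> = \<alpha> then c \<beta> else 0)"
    by (intro sum.cong) (auto simp: coeff_monom)
  then show ?thesis
    using assms by (simp add: coeff_sum)
qed

lemma powi_sum_eq_0_if_infinite_zeros:
  fixes c :: "'b \<Rightarrow> 'a::field" and E :: "'b \<Rightarrow> int"
  assumes A: "finite A" and Y: "infinite Y" "0 \<notin> Y"
    and zeros: "\<And>y. y \<in> Y \<Longrightarrow> (\<Sum>\<alpha>\<in>A. c \<alpha> * y powi E \<alpha>) = 0"
  shows powi_sum_eq_0_if_infinite_zeros_eval: "y \<noteq> 0 \<Longrightarrow> (\<Sum>\<alpha>\<in>A. c \<alpha> * y powi E \<alpha>) = 0"
    and powi_sum_eq_0_if_infinite_zeros_coeff: "inj_on E A \<Longrightarrow> \<alpha> \<in> A \<Longrightarrow> c \<alpha> = 0"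
proof -
  define N where "N = (\<Sum>\<alpha>\<in>A. nat \<bar>E \<alpha>\<bar>)"
  have shift: "\<forall>\<alpha>\<in>A. 0 \<le> E \<alpha> + int N"
  proof
    fix \<alpha> assume "\<alpha> \<in> A"
    then have "nat \<bar>E \<alpha>\<bar> \<le> N" unfolding N_def using A by (intro member_le_sum) auto
    then show "0 \<le> E \<alpha> + int N" by linarith
  qed
  define p where "p = (\<Sum>\<alpha>\<in>A. monom (c \<alpha>) (nat (E \<alpha> + int N)))"
  have "poly p y = 0" if "y \<in> Y" for y
    using Y(2) zeros[OF that] poly_shifted_powi_sum[OF shift, of y c] that
    unfolding p_def by fastforce
  then have "p = 0"
    using Y(1) poly_roots_finite[of p] finite_subset[of Y "{y. poly p y = 0}"] by blast
  show "y \<noteq> 0 \<Longrightarrow> (\<Sum>\<alpha>\<in>A. c \<alpha> * y powi E \<alpha>) = 0"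
    using poly_shifted_powi_sum[OF shift, of y c] \<open>p = 0\<close> unfolding p_def by simp
  show "inj_on E A \<Longrightarrow> \<alpha> \<in> A \<Longrightarrow> c \<alpha> = 0"
    using coeff_shifted_powi_sum[OF A _ shift, of \<alpha> c] \<open>p = 0\<close> unfolding p_def by simp
qed

lemma abs_sum_digits_le:
  fixes B :: int and d :: "nat \<Rightarrow> int"
  assumes "B \<ge> 1" "\<forall>j<L. \<bar>d j\<bar> \<le> B - 1"
  shows "\<bar>\<Sum>j<L. d j * B ^ j\<bar> \<le> B ^ L - 1"
  using assms(2)
proof (induction L)
  case (Suc L)
  have "\<bar>d L * B ^ L\<bar> \<le> (B - 1) * B ^ L"
    using Suc.prems assms(1) by (simp add: abs_mult mult_right_mono)
  moreover have "\<bar>\<Sum>j<L. d j * B ^ j\<bar> \<le> B ^ L - 1"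
    using Suc by auto
  ultimately show ?case
    by (simp add: algebra_simps)
qed simp

lemma sum_digits_eq_0_imp:
  fixes B :: int and d :: "nat \<Rightarrow> int"
  assumes "B \<ge> 1" "\<forall>j<L. \<bar>d j\<bar> \<le> B - 1" "(\<Sum>j<L. d j * B ^ j) = 0" "j < L"
  shows "d j = 0"
  using assms(2-)
proof (induction L)
  case (Suc L)
  have digits: "\<forall>j<L. \<bar>d j\<bar> \<le> B - 1"
    using Suc.prems(1) by simp
  have "\<bar>\<Sum>j<L. d j * B ^ j\<bar> < B ^ L"
    using abs_sum_digits_le[OF assms(1) digits] by simp
  moreover have "d L * B ^ L = - (\<Sum>j<L. d j * B ^ j)"
    using Suc.prems(2) by simp
  ultimately have "\<bar>d L\<bar> * B ^ L < 1 * B ^ L"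
    by (simp add: abs_mult)
  then have "d L = 0"
    using assms(1) by (simp add: mult_less_cancel_right)
  then show ?case
    using Suc digits by (cases "j = L") auto
qed simp

lemma inj_on_digit_encoding:
  fixes B :: int
  assumes B: "\<forall>\<alpha>\<in>A. \<forall>j. 2 * \<bar>Poly_Mapping.lookup \<alpha> j\<bar> < B"
    and L: "\<forall>\<alpha>\<in>A. Poly_Mapping.keys \<alpha> \<subseteq> {..<L}"
  shows "inj_on (\<lambda>\<alpha>. \<Sum>j<L. Poly_Mapping.lookup \<alpha> j * B ^ j) A"
proof (rule inj_onI)
  fix \<alpha> \<beta> assume \<alpha>: "\<alpha> \<in> A" and \<beta>: "\<beta> \<in> A"
    and eq: "(\<Sum>j<L. Poly_Mapping.lookup \<alpha> j * B ^ j) = (\<Sum>j<L. Poly_Mapping.lookup \<beta> j * B ^ j)"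
  let ?d = "\<lambda>j. Poly_Mapping.lookup \<alpha> j - Poly_Mapping.lookup \<beta> j"
  have digit: "\<bar>?d j\<bar> \<le> B - 1" for j
  proof -
    have "2 * \<bar>Poly_Mapping.lookup \<alpha> j\<bar> < B" "2 * \<bar>Poly_Mapping.lookup \<beta> j\<bar> < B"
      using B \<alpha> \<beta> by auto
    then show ?thesis
      unfolding abs_le_iff using abs_ge_self abs_ge_minus_self by (smt (verit))
  qed
  then have "B \<ge> 1"
    using abs_ge_zero[of "?d 0"] by (smt (verit) digit[of 0])
  moreover have "(\<Sum>j<L. ?d j * B ^ j) = 0"
    using eq by (simp add: left_diff_distrib sum_subtractf)
  ultimately have "?d j = 0" if "j < L" for j
    using sum_digits_eq_0_imp[of B L ?d j] digit that by blast
  moreover have "?d j = 0" if "\<not> j < L" for j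
  proof -
    have "j \<notin> Poly_Mapping.keys \<alpha>" "j \<notin> Poly_Mapping.keys \<beta>"
      using L \<alpha> \<beta> that by auto
    then show ?thesis
      by (simp add: in_keys_iff)
  qed
  ultimately have "?d j = 0" for j
    by blast
  then show "\<alpha> = \<beta>"
    by (intro poly_mapping_eqI) simp
qed

lemma monom_eval_power_points:
  fixes y :: "'a::field" and B :: int
  assumes "y \<noteq> 0" "B \<ge> 0" "Poly_Mapping.keys \<alpha> \<subseteq> {..<L}"
  shows "monom_eval (\<lambda>j. y ^ nat (B ^ j)) \<alpha> = y powi (\<Sum>j<L. Poly_Mapping.lookup \<alpha> j * B ^ j)"
proof -
  have "(y ^ nat (B ^ j)) powi e = y powi (e * B ^ j)" for e j
  proof -
    have "y ^ nat (B ^ j) = y powi (B ^ j)"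
      using assms(2) by (simp add: power_int_def)
    then show ?thesis
      by (simp add: power_int_mult mult.commute[of e])
  qed
  then have "monom_eval (\<lambda>j. y ^ nat (B ^ j)) \<alpha> = (\<Prod>j<L. y powi (Poly_Mapping.lookup \<alpha> j * B ^ j))"
    using assms(3) by (simp add: monom_eval_superset[of "{..<L}"])
  also have "\<dots> = y powi (\<Sum>j<L. Poly_Mapping.lookup \<alpha> j * B ^ j)"
    using assms(1) by (induction L) (simp_all add: power_int_add)
  finally show ?thesis .
qed

lemma inj_power_points:
  fixes B :: int
  assumes "B \<ge> 2" "m \<ge> 2"
  shows "inj (\<lambda>j. (of_nat m :: 'a::field_char_0) ^ nat (B ^ j))"
proof (rule injI)
  fix i j assume "(of_nat m :: 'a) ^ nat (B ^ i) = of_nat m ^ nat (B ^ j)"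
  then have "m ^ nat (B ^ i) = m ^ nat (B ^ j)"
    by (metis of_nat_eq_iff of_nat_power)
  then have "nat (B ^ i) = nat (B ^ j)"
    using assms by (simp add: power_inject_exp)
  then have "B ^ i = B ^ j"
    using assms by (simp add: eq_nat_nat_iff)
  then show "i = j"
    using assms by (simp add: power_inject_exp)
qed

lemma exists_digit_base:
  fixes A :: "(nat \<Rightarrow>\<^sub>0 int) set"
  assumes "finite A"
  obtains L and B :: int where "B \<ge> 2" "\<forall>\<alpha>\<in>A. Poly_Mapping.keys \<alpha> \<subseteq> {..<L}"
    "\<forall>\<alpha>\<in>A. \<forall>j. 2 * \<bar>Poly_Mapping.lookup \<alpha> j\<bar> < B"
proof -
  have "finite (\<Union>\<alpha>\<in>A. Poly_Mapping.keys \<alpha>)"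
    using assms by simp
  then obtain L where L: "\<forall>\<alpha>\<in>A. Poly_Mapping.keys \<alpha> \<subseteq> {..<L}"
    by (auto simp: finite_nat_iff_bounded)
  define M where "M = (\<Sum>\<alpha>\<in>A. \<Sum>j<L. \<bar>Poly_Mapping.lookup \<alpha> j\<bar>)"
  have bound: "\<bar>Poly_Mapping.lookup \<alpha> j\<bar> \<le> M" if "\<alpha> \<in> A" for \<alpha> j
  proof (cases "j < L")
    case True
    have "\<bar>Poly_Mapping.lookup \<alpha> j\<bar> \<le> (\<Sum>j<L. \<bar>Poly_Mapping.lookup \<alpha> j\<bar>)"
      using True by (intro member_le_sum) auto
    also have "\<dots> \<le> M"
      unfolding M_def using that assms by (intro member_le_sum) (auto simp: sum_nonneg)
    finally show ?thesis .
  next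
    case False
    then have "j \<notin> Poly_Mapping.keys \<alpha>"
      using L that by auto
    then show ?thesis
      by (simp add: in_keys_iff M_def sum_nonneg)
  qed
  have "\<forall>\<alpha>\<in>A. \<forall>j. 2 * \<bar>Poly_Mapping.lookup \<alpha> j\<bar> < 2 * M + 2"
  proof (intro ballI allI)
    fix \<alpha> j assume "\<alpha> \<in> A"
    then show "2 * \<bar>Poly_Mapping.lookup \<alpha> j\<bar> < 2 * M + 2"
      using bound[of \<alpha> j] by simp
  qed
  moreover have "2 * M + 2 \<ge> 2"
    by (simp add: M_def sum_nonneg)
  ultimately show ?thesis
    using that L by blast
qed

text \<open>Kronecker substitution \<open>x\<^sub>j \<mapsto> y\<^bsup>B\<^sup>j\<^esup>\<close>, with \<open>B\<close> larger than twice every exponent,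
  turns the Laurent polynomial into a one-variable one with the same coefficients.\<close>

lemma laurent_eq_0_if_eval_eq_0:
  fixes f :: "'a::field_char_0 laurent"
  assumes zeros: "\<And>z. \<forall>i. z i \<noteq> 0 \<Longrightarrow> inj z \<Longrightarrow> leval z f = 0"
  shows "f = 0"
proof -
  define A where "A = Poly_Mapping.keys f"
  have "finite A"
    by (simp add: A_def)
  then obtain L and B :: int where B2: "B \<ge> 2" and L: "\<forall>\<alpha>\<in>A. Poly_Mapping.keys \<alpha> \<subseteq> {..<L}"
    and B: "\<forall>\<alpha>\<in>A. \<forall>j. 2 * \<bar>Poly_Mapping.lookup \<alpha> j\<bar> < B"
    by (rule exists_digit_base)
  define E where "E \<alpha> = (\<Sum>j<L. Poly_Mapping.lookup \<alpha> j * B ^ j)" for \<alpha>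
  define Y where "Y = (of_nat :: nat \<Rightarrow> 'a) ` {2..}"
  have "infinite Y"
    unfolding Y_def using infinite_Ici[of "2::nat"]
    by (auto dest!: finite_imageD intro: inj_on_subset[OF inj_of_nat])
  moreover have "0 \<notin> Y"
    by (auto simp: Y_def)
  moreover have "(\<Sum>\<alpha>\<in>A. Poly_Mapping.lookup f \<alpha> * y powi E \<alpha>) = 0" if "y \<in> Y" for y
  proof -
    obtain m where m: "m \<ge> 2" "y = of_nat m"
      using \<open>y \<in> Y\<close> by (auto simp: Y_def)
    have "monom_eval (\<lambda>j. y ^ nat (B ^ j)) \<alpha> = y powi E \<alpha>" if "\<alpha> \<in> A" for \<alpha>
      unfolding E_def using m B2 L that by (intro monom_eval_power_points) auto
    then have "leval (\<lambda>j. y ^ nat (B ^ j)) f = (\<Sum>\<alpha>\<in>A. Poly_Mapping.lookup f \<alpha> * y powi E \<alpha>)"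
      unfolding leval_monom_eval A_def by (intro sum.cong) simp_all
    moreover have "leval (\<lambda>j. y ^ nat (B ^ j)) f = 0"
      using m inj_power_points[OF B2 m(1)] by (intro zeros) auto
    ultimately show ?thesis
      by simp
  qed
  moreover have "inj_on E A"
    unfolding E_def by (rule inj_on_digit_encoding[OF B L])
  ultimately have "Poly_Mapping.lookup f \<alpha> = 0" if "\<alpha> \<in> A" for \<alpha>
    using powi_sum_eq_0_if_infinite_zeros_coeff[where c = "Poly_Mapping.lookup f" and E = E and A = A]
      that by (simp add: A_def)
  then show "f = 0"
    by (intro poly_mapping_eqI) (auto simp: A_def in_keys_iff)
qed

lemma laurent_eqI_eval:
  fixes f g :: "'a::field_char_0 laurent"
  assumes "\<And>z. \<forall>i. z i \<noteq> 0 \<Longrightarrow> inj z \<Longrightarrow> leval z f = leval z g"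
  shows "f = g"
  using laurent_eq_0_if_eval_eq_0[of "f - g"] assms by (simp add: leval_diff)

lemma laurentV_add: "f \<in> laurentV n \<Longrightarrow> g \<in> laurentV n \<Longrightarrow> f + g \<in> laurentV n"
  unfolding laurentV_def using keys_add[of f g] by blast

lemma laurentV_uminus: "f \<in> laurentV n \<Longrightarrow> - f \<in> laurentV n"
  by (simp add: laurentV_def)

lemma laurentV_diff: "f \<in> laurentV n \<Longrightarrow> g \<in> laurentV n \<Longrightarrow> f - g \<in> laurentV n"
  using laurentV_add[of f n "- g"] laurentV_uminus[of g n] by simp

lemma laurentV_single: "Poly_Mapping.keys \<alpha> \<subseteq> {1..n} \<Longrightarrow> Poly_Mapping.single \<alpha> v \<in> laurentV n"
  by (simp add: laurentV_def)

lemma laurentV_lconst: "lconst c \<in> laurentV n"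
  unfolding lconst_def by (rule laurentV_single) simp

lemma laurentV_lvar: "i \<in> {1..n} \<Longrightarrow> lvar i \<in> laurentV n"
  unfolding lvar_def by (rule laurentV_single) (simp add: evec_def)

lemma laurentV_lvar_inv: "i \<in> {1..n} \<Longrightarrow> lvar_inv i \<in> laurentV n"
  unfolding lvar_inv_def by (rule laurentV_single) (simp add: evec_def)

lemma laurentV_zero: "0 \<in> laurentV n"
  by (simp add: laurentV_def)

lemma laurentV_one: "1 \<in> laurentV n"
  by (simp add: laurentV_def)

lemma laurentV_mult:
  assumes "f \<in> laurentV n" "g \<in> laurentV n"
  shows "f * g \<in> laurentV n"
  unfolding laurentV_def
proof (intro CollectI ballI)
  fix \<gamma> assume "\<gamma> \<in> Poly_Mapping.keys (f * g)"
  then obtain \<alpha> \<beta> where "\<gamma> = \<alpha> + \<beta>" "\<alpha> \<in> Poly_Mapping.keys f" "\<beta> \<in> Poly_Mapping.keys g"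
    using keys_mult[of f g] by blast
  then show "Poly_Mapping.keys \<gamma> \<subseteq> {1..n}"
    using assms keys_add[of \<alpha> \<beta>] unfolding laurentV_def by blast
qed

lemma laurentV_sum: "(\<And>x. x \<in> A \<Longrightarrow> F x \<in> laurentV n) \<Longrightarrow> (\<Sum>x\<in>A. F x) \<in> laurentV n"
  by (induction A rule: infinite_finite_induct) (auto simp: laurentV_zero laurentV_add)

lemma laurentV_power: "f \<in> laurentV n \<Longrightarrow> f ^ m \<in> laurentV n"
  by (induction m) (auto simp: laurentV_one laurentV_mult)

lemma laurentV_msubst:
  assumes "\<sigma> ` {1..n} \<subseteq> {1..n}" "f \<in> laurentV n"
  shows "msubst c \<sigma> f \<in> laurentV n"
  unfolding msubst_def
proof (intro laurentV_sum laurentV_single)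
  fix \<alpha> assume "\<alpha> \<in> Poly_Mapping.keys f"
  then have "\<sigma> ` Poly_Mapping.keys \<alpha> \<subseteq> {1..n}"
    using assms by (auto simp: laurentV_def)
  moreover have "Poly_Mapping.keys (\<Sum>j\<in>Poly_Mapping.keys \<alpha>. Poly_Mapping.single (\<sigma> j) (Poly_Mapping.lookup \<alpha> j))
      \<subseteq> \<sigma> ` Poly_Mapping.keys \<alpha>"
    using keys_sum[of "\<lambda>j. Poly_Mapping.single (\<sigma> j) (Poly_Mapping.lookup \<alpha> j)"] by auto
  ultimately show "Poly_Mapping.keys (\<Sum>j\<in>Poly_Mapping.keys \<alpha>. Poly_Mapping.single (\<sigma> j) (Poly_Mapping.lookup \<alpha> j)) \<subseteq> {1..n}"
    by blast
qed

lemma swp_eq_msubst: "swp i f = msubst (\<lambda>_. 1) (transpose i (i + 1)) f"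
  unfolding swp_def transpose_def ..

lemma leval_swp: "leval z (swp i f) = leval (z \<circ> transpose i (i + 1)) f"
  unfolding swp_eq_msubst leval_msubst[OF inj_transpose] by (simp add: comp_def)

lemma laurentV_swp: "1 \<le> i \<Longrightarrow> i < n \<Longrightarrow> f \<in> laurentV n \<Longrightarrow> swp i f \<in> laurentV n"
  unfolding swp_eq_msubst by (rule laurentV_msubst) (auto simp: transpose_def)

definition cyc_pred :: "nat \<Rightarrow> nat \<Rightarrow> nat" where
  "cyc_pred n j = (if j = 1 then n else if 2 \<le> j \<and> j \<le> n then j - 1 else j)"

definition cyc_succ :: "nat \<Rightarrow> nat \<Rightarrow> nat" where
  "cyc_succ n j = (if j = n then 1 else if 1 \<le> j \<and> j < n then j + 1 else j)"

lemma inj_cyc_pred: "n \<ge> 1 \<Longrightarrow> inj (cyc_pred n)"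
  by (auto simp: inj_def cyc_pred_def split: if_splits)

lemma inj_cyc_succ: "n \<ge> 1 \<Longrightarrow> inj (cyc_succ n)"
  by (auto simp: inj_def cyc_succ_def split: if_splits)

lemma cyc_succ_mem: "j \<in> {1..n} \<Longrightarrow> cyc_succ n j \<in> {1..n}"
  by (auto simp: cyc_succ_def)

lemma cyc_succ_less: "1 \<le> j \<Longrightarrow> j < j' \<Longrightarrow> j' < n \<Longrightarrow> cyc_succ n j < cyc_succ n j'"
  by (auto simp: cyc_succ_def)

definition omega_point :: "'a::field \<Rightarrow> nat \<Rightarrow> (nat \<Rightarrow> 'a) \<Rightarrow> nat \<Rightarrow> 'a" where
  "omega_point q n z j = (if j = 1 then q else 1) * z (cyc_pred n j)"

definition omega_inv :: "'a::field \<Rightarrow> nat \<Rightarrow> 'a laurent \<Rightarrow> 'a laurent" where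
  "omega_inv q n f = msubst (\<lambda>j. if j = n then inverse q else 1) (cyc_succ n) f"

definition omega_inv_point :: "'a::field \<Rightarrow> nat \<Rightarrow> (nat \<Rightarrow> 'a) \<Rightarrow> nat \<Rightarrow> 'a" where
  "omega_inv_point q n z j = (if j = n then inverse q else 1) * z (cyc_succ n j)"

lemma leval_omega: "n \<ge> 1 \<Longrightarrow> leval z (omega q n f) = leval (omega_point q n z) f"
proof -
  assume "n \<ge> 1"
  have "omega q n f = msubst (\<lambda>j. if j = 1 then q else 1) (cyc_pred n) f"
    unfolding omega_def cyc_pred_def ..
  then show ?thesis
    using leval_msubst[OF inj_cyc_pred[OF \<open>n \<ge> 1\<close>]] by (simp add: omega_point_def[abs_def])
qed

lemma leval_omega_inv: "n \<ge> 1 \<Longrightarrow> leval z (omega_inv q n f) = leval (omega_inv_point q n z) f"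
  unfolding omega_inv_def using leval_msubst[OF inj_cyc_succ] by (simp add: omega_inv_point_def[abs_def])

lemma laurentV_omega: "f \<in> laurentV n \<Longrightarrow> omega q n f \<in> laurentV n"
  unfolding omega_def by (rule laurentV_msubst) auto

lemma laurentV_omega_inv: "f \<in> laurentV n \<Longrightarrow> omega_inv q n f \<in> laurentV n"
  unfolding omega_inv_def by (rule laurentV_msubst) (auto simp: cyc_succ_def)

lemma omega_point_cyc_succ:
  "n \<ge> 2 \<Longrightarrow> j \<in> {1..n} \<Longrightarrow> omega_point q n z (cyc_succ n j) = (if j = n then q else 1) * z j"
  by (auto simp: omega_point_def cyc_succ_def cyc_pred_def)

lemma omega_omega_inv:
  fixes q :: "'a::field_char_0"
  assumes "n \<ge> 2" "q \<noteq> 0"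
  shows "omega q n (omega_inv q n f) = f"
    and "omega_inv q n (omega q n f) = f"
proof -
  have n: "n \<ge> 1"
    using assms by simp
  have "omega_inv_point q n (omega_point q n z) = z" "omega_point q n (omega_inv_point q n z) = z" for z
    using assms by (auto simp: fun_eq_iff omega_point_def omega_inv_point_def cyc_pred_def cyc_succ_def)
  then show "omega q n (omega_inv q n f) = f" "omega_inv q n (omega q n f) = f"
    by (simp_all add: laurent_eqI_eval leval_omega[OF n] leval_omega_inv[OF n])
qed

definition lvar_ratio :: "nat \<Rightarrow> 'a::comm_ring_1 laurent" where
  "lvar_ratio i = lvar i * lvar_inv (i + 1)"

text \<open>\<open>(u\<^sup>m - 1) / (u - 1)\<close> for \<open>u = x\<^sub>i / x\<^sub>i\<^sub>+\<^sub>1\<close> and any integer \<open>m\<close>.\<close>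

definition ratio_geom_sum :: "nat \<Rightarrow> int \<Rightarrow> 'a::comm_ring_1 laurent" where
  "ratio_geom_sum i m = (if 0 \<le> m then (\<Sum>j<nat m. lvar_ratio i ^ j)
     else - (lvar (i + 1) * lvar_inv i * (\<Sum>j<nat (- m). (lvar (i + 1) * lvar_inv i) ^ j)))"

text \<open>The divided difference \<open>(s\<^sub>i f - f) / (x\<^sub>i / x\<^sub>i\<^sub>+\<^sub>1 - 1)\<close>, computed monomial by monomial.\<close>

definition divdiff :: "nat \<Rightarrow> 'a::comm_ring_1 laurent \<Rightarrow> 'a laurent" where
  "divdiff i f = (\<Sum>\<alpha>\<in>Poly_Mapping.keys f. Poly_Mapping.single \<alpha> (Poly_Mapping.lookup f \<alpha>) *
     ratio_geom_sum i (Poly_Mapping.lookup \<alpha> (i + 1) - Poly_Mapping.lookup \<alpha> i))"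

lemma leval_lvar_ratio: "\<forall>j. z j \<noteq> 0 \<Longrightarrow> leval z (lvar_ratio i) = z i / z (i + 1)"
  by (simp add: lvar_ratio_def leval_mult field_simps)

lemma leval_ratio_geom_sum:
  fixes z :: "nat \<Rightarrow> 'a::field"
  assumes z: "\<forall>j. z j \<noteq> 0"
  shows "(z i / z (i + 1) - 1) * leval z (ratio_geom_sum i m) = (z i / z (i + 1)) powi m - 1"
proof (cases "0 \<le> m")
  case True
  let ?u = "z i / z (i + 1)"
  have "leval z (ratio_geom_sum i m) = (\<Sum>j<nat m. ?u ^ j)"
    using True z by (simp add: ratio_geom_sum_def leval_sum leval_power leval_lvar_ratio)
  then show ?thesis
    using True by (simp add: power_diff_1_eq[symmetric] power_int_def)
next
  case False
  let ?u = "z i / z (i + 1)" and ?v = "z (i + 1) / z i"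
  define S where "S = (\<Sum>j<nat (- m). ?v ^ j)"
  have "leval z (lvar (i + 1) * lvar_inv i) = ?v"
    using z by (simp add: leval_mult divide_inverse)
  then have "leval z (ratio_geom_sum i m) = - (?v * S)"
    using z False by (simp add: S_def ratio_geom_sum_def leval_sum leval_power leval_mult leval_uminus)
  moreover have "(?u - 1) * - (?v * S) = (?v - 1) * S"
    using z by (simp add: field_simps)
  moreover have "(?v - 1) * S = ?u powi m - 1"
    using False z by (simp add: S_def power_diff_1_eq power_int_def power_inverse)
  ultimately show ?thesis
    by simp
qed

lemma monom_eval_transpose:
  fixes z :: "nat \<Rightarrow> 'a::field"
  assumes z: "\<forall>j. z j \<noteq> 0"
  shows "monom_eval (z \<circ> transpose i (i + 1)) \<alpha>
    = monom_eval z \<alpha> * (z i / z (i + 1)) powi (Poly_Mapping.lookup \<alpha> (i + 1) - Poly_Mapping.lookup \<alpha> i)"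
proof -
  let ?S = "Poly_Mapping.keys \<alpha> \<union> {i, i + 1}"
  let ?R = "?S - {i} - {i + 1}"
  let ?a = "Poly_Mapping.lookup \<alpha> i" and ?b = "Poly_Mapping.lookup \<alpha> (i + 1)"
  let ?rest = "\<Prod>j\<in>?R. z j powi Poly_Mapping.lookup \<alpha> j"
  have split: "(\<Prod>j\<in>?S. g j) = g i * (g (i + 1) * (\<Prod>j\<in>?R. g j))" for g :: "nat \<Rightarrow> 'a"
    by (subst prod.remove[of _ i], simp, simp, subst prod.remove[of _ "i + 1"]) auto
  have rest: "(\<Prod>j\<in>?R. (z \<circ> transpose i (i + 1)) j powi Poly_Mapping.lookup \<alpha> j) = ?rest"
    by (rule prod.cong) auto
  have "monom_eval (z \<circ> transpose i (i + 1)) \<alpha> = (\<Prod>j\<in>?S. (z \<circ> transpose i (i + 1)) j powi Poly_Mapping.lookup \<alpha> j)"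
    by (rule monom_eval_superset) auto
  also have "\<dots> = z (i + 1) powi ?a * (z i powi ?b * ?rest)"
    by (simp only: split rest) simp
  finally have "monom_eval (z \<circ> transpose i (i + 1)) \<alpha> = z (i + 1) powi ?a * (z i powi ?b * ?rest)" .
  moreover have "monom_eval z \<alpha> = (\<Prod>j\<in>?S. z j powi Poly_Mapping.lookup \<alpha> j)"
    by (rule monom_eval_superset) auto
  then have "monom_eval z \<alpha> = z i powi ?a * (z (i + 1) powi ?b * ?rest)"
    by (simp only: split)
  moreover have "z (i + 1) powi ?a * z i powi ?b = z i powi ?a * z (i + 1) powi ?b * (z i / z (i + 1)) powi (?b - ?a)"
    using z by (simp add: power_int_divide_distrib power_int_diff field_simps)
  ultimately show ?thesis
    by (simp add: mult_ac)
qed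

lemma lvar_ratio_minus_1_mult_divdiff:
  fixes f :: "'a::field_char_0 laurent"
  shows "(lvar_ratio i - 1) * divdiff i f = swp i f - f"
proof (rule laurent_eqI_eval)
  fix z :: "nat \<Rightarrow> 'a" assume z: "\<forall>j. z j \<noteq> 0"
  let ?u = "z i / z (i + 1)" and ?f = "Poly_Mapping.lookup f"
  let ?m = "\<lambda>\<alpha>. Poly_Mapping.lookup \<alpha> (i + 1) - Poly_Mapping.lookup \<alpha> i"
  have "leval z ((lvar_ratio i - 1) * divdiff i f)
      = (\<Sum>\<alpha>\<in>Poly_Mapping.keys f. ?f \<alpha> * monom_eval z \<alpha> * ((?u - 1) * leval z (ratio_geom_sum i (?m \<alpha>))))"
    using z by (simp add: leval_mult leval_diff leval_lvar_ratio divdiff_def leval_sum leval_single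
        sum_distrib_left mult_ac)
  also have "\<dots> = (\<Sum>\<alpha>\<in>Poly_Mapping.keys f. ?f \<alpha> * monom_eval z \<alpha> * (?u powi ?m \<alpha> - 1))"
    using leval_ratio_geom_sum[OF z] by simp
  also have "\<dots> = (\<Sum>\<alpha>\<in>Poly_Mapping.keys f. ?f \<alpha> * monom_eval (z \<circ> transpose i (i + 1)) \<alpha>)
      - (\<Sum>\<alpha>\<in>Poly_Mapping.keys f. ?f \<alpha> * monom_eval z \<alpha>)"
    using monom_eval_transpose[OF z] by (simp add: sum_subtractf algebra_simps)
  also have "\<dots> = leval z (swp i f - f)"
    by (simp only: leval_diff leval_swp) (simp add: leval_monom_eval)
  finally show "leval z ((lvar_ratio i - 1) * divdiff i f) = leval z (swp i f - f)" .
qed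

lemma lvar_ratio_ne_1: "lvar_ratio i \<noteq> (1 :: 'a::field_char_0 laurent)"
proof
  assume "lvar_ratio i = (1 :: 'a laurent)"
  then have "leval (\<lambda>j. if j = i then 2 else 1) (lvar_ratio i) = (1 :: 'a)"
    by simp
  then show False
    by (simp add: leval_lvar_ratio)
qed

lemma heckeT_eq:
  fixes st :: "'a::field_char_0"
  shows "heckeT st i f = lconst st * swp i f + lconst (st - inverse st) * divdiff i f"
  unfolding heckeT_def lvar_ratio_def[symmetric]
proof (rule the_equality)
  show "(lvar_ratio i - 1) * (lconst st * swp i f + lconst (st - inverse st) * divdiff i f - lconst st * swp i f)
      = lconst (st - inverse st) * (swp i f - f)"
    by (simp add: lvar_ratio_minus_1_mult_divdiff[symmetric] mult_ac)
next
  fix g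
  assume "(lvar_ratio i - 1) * (g - lconst st * swp i f) = lconst (st - inverse st) * (swp i f - f)"
  then have "(lvar_ratio i - 1) * (g - lconst st * swp i f) = (lvar_ratio i - 1) * (lconst (st - inverse st) * divdiff i f)"
    by (simp add: lvar_ratio_minus_1_mult_divdiff[symmetric] mult_ac)
  then have "g - lconst st * swp i f = lconst (st - inverse st) * divdiff i f"
    using lvar_ratio_ne_1[of i] by auto
  then show "g = lconst st * swp i f + lconst (st - inverse st) * divdiff i f"
    by (simp add: diff_eq_eq add.commute)
qed

lemma laurentV_heckeT:
  fixes st :: "'a::field_char_0"
  assumes "1 \<le> i" "i < n" "f \<in> laurentV n"
  shows "heckeT st i f \<in> laurentV n"
proof -
  have "ratio_geom_sum i m \<in> laurentV n" for m :: int
    unfolding ratio_geom_sum_def lvar_ratio_def using assms(1,2)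
    by (auto intro!: laurentV_sum laurentV_power laurentV_mult laurentV_lvar laurentV_lvar_inv laurentV_uminus)
  then have "divdiff i f \<in> laurentV n"
    unfolding divdiff_def using assms(3)
    by (intro laurentV_sum laurentV_mult laurentV_single) (auto simp: laurentV_def)
  then show ?thesis
    unfolding heckeT_eq using assms
    by (intro laurentV_add laurentV_mult laurentV_lconst laurentV_swp)
qed

lemma leval_heckeT:
  fixes st :: "'a::field_char_0"
  assumes z: "\<forall>j. z j \<noteq> 0" and ne: "z i \<noteq> z (i + 1)"
  shows "leval z (heckeT st i f) = st * leval (z \<circ> transpose i (i + 1)) f +
     (st - inverse st) * (leval (z \<circ> transpose i (i + 1)) f - leval z f) / (z i / z (i + 1) - 1)"
proof -
  have "z i / z (i + 1) - 1 \<noteq> 0"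
    using ne z by (simp add: field_simps)
  moreover have "(z i / z (i + 1) - 1) * leval z (divdiff i f) = leval (z \<circ> transpose i (i + 1)) f - leval z f"
    using arg_cong[OF lvar_ratio_minus_1_mult_divdiff, of "leval z" i f] z
    by (simp add: leval_mult leval_diff leval_lvar_ratio leval_swp)
  ultimately have "leval z (divdiff i f)
      = (leval (z \<circ> transpose i (i + 1)) f - leval z f) / (z i / z (i + 1) - 1)"
    by (simp add: eq_divide_eq mult.commute)
  then show ?thesis
    unfolding heckeT_eq using z by (simp add: leval_add leval_mult leval_swp)
qed

lemma heckeT_diff_lconst_mult:
  fixes st :: "'a::field_char_0"
  shows "heckeT st i (f - lconst a * g) = heckeT st i f - lconst a * heckeT st i g"
proof (rule laurent_eqI_eval)
  fix z :: "nat \<Rightarrow> 'a" assume z: "\<forall>j. z j \<noteq> 0" and "inj z"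
  then have ne: "z i \<noteq> z (i + 1)"
    by (auto dest: injD)
  have z': "\<forall>j. (z \<circ> transpose i (i + 1)) j \<noteq> 0"
    using z by simp
  show "leval z (heckeT st i (f - lconst a * g)) = leval z (heckeT st i f - lconst a * heckeT st i g)"
    unfolding leval_diff leval_mult[OF z] leval_mult[OF z'] leval_lconst leval_heckeT[OF z ne]
    by (simp add: divide_inverse algebra_simps)
qed

lemma hecke_quadratic_identity:
  fixes st u A B :: "'a::field"
  assumes st: "st \<noteq> 0" and u: "u \<noteq> 0" "u \<noteq> 1"
  defines "c \<equiv> st - inverse st"
  defines "T1 \<equiv> st * B + c * (B - A) / (u - 1)"
    and "T2 \<equiv> st * A + c * (A - B) / (inverse u - 1)"
  shows "st * T2 + c * (T2 - T1) / (u - 1) = c * T1 + A"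
proof -
  define D where "D = u - 1"
  define E where "E = (B - A) / D"
  have D0: "D \<noteq> 0"
    using u by (simp add: D_def)
  have DE: "D * E = B - A"
    using D0 by (simp add: E_def)
  have cs: "c * st = st * st - 1"
    using st by (simp add: c_def algebra_simps)
  have T1: "T1 = st * B + c * E"
    by (simp add: T1_def E_def D_def)
  have inv_u: "inverse u - 1 = - D / u"
    using u by (simp add: D_def field_simps)
  have "c * (A - B) / (inverse u - 1) = c * u * E"
    unfolding inv_u E_def using u D0 by (simp add: field_simps)
  then have T2: "T2 = st * A + c * u * E"
    by (simp add: T2_def)
  have "T2 - T1 = st * (A - B) + c * (u - 1) * E"
    by (simp add: T1 T2 algebra_simps)
  also have "\<dots> = st * (- (D * E)) + c * D * E"
    using DE by (simp add: D_def)
  finally have T21: "T2 - T1 = D * (E * (c - st))"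
    by (simp add: algebra_simps)
  have "st * T2 + c * (T2 - T1) / (u - 1) = st * T2 + c * (E * (c - st))"
    using D0 by (simp add: T21 D_def[symmetric])
  also have "\<dots> = st * st * A + (c * st) * (D * E) + c * c * E"
    by (simp add: T2 D_def algebra_simps)
  also have "\<dots> = st * st * A + (st * st - 1) * (B - A) + c * c * E"
    by (simp only: cs DE)
  also have "\<dots> = (c * st) * B + c * c * E + A"
    by (simp add: cs algebra_simps)
  also have "\<dots> = c * T1 + A"
    by (simp add: T1 algebra_simps)
  finally show ?thesis .
qed
lemma heckeT_quadratic:
  fixes st :: "'a::field_char_0"
  assumes st: "st \<noteq> 0"
  shows "heckeT st i (heckeT st i f) = lconst (st - inverse st) * heckeT st i f + f"
proof (rule laurent_eqI_eval)
  fix z :: "nat \<Rightarrow> 'a" assume z: "\<forall>j. z j \<noteq> 0" and "inj z"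
  then have ne: "z i \<noteq> z (i + 1)"
    by (auto dest: injD)
  define z' where "z' = z \<circ> transpose i (i + 1)"
  define u where "u = z i / z (i + 1)"
  have z': "\<forall>j. z' j \<noteq> 0" "z' i \<noteq> z' (i + 1)" "z' \<circ> transpose i (i + 1) = z"
    using z ne by (auto simp: z'_def fun_eq_iff)
  have u: "u \<noteq> 0" "u \<noteq> 1" "z' i / z' (i + 1) = inverse u"
    using z ne by (auto simp: u_def z'_def)
  have T: "leval z (heckeT st i g) = st * leval z' g + (st - inverse st) * (leval z' g - leval z g) / (u - 1)"
    for g
    using leval_heckeT[OF z ne] by (simp add: z'_def u_def)
  have T': "leval z' (heckeT st i f)
      = st * leval z f + (st - inverse st) * (leval z f - leval z' f) / (inverse u - 1)"
    using leval_heckeT[OF z'(1,2)] z'(3) u(3) by simp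
  show "leval z (heckeT st i (heckeT st i f)) = leval z (lconst (st - inverse st) * heckeT st i f + f)"
    unfolding T[of "heckeT st i f"] T' T[of f] leval_add leval_mult[OF z] leval_lconst
    by (rule hecke_quadratic_identity[OF st u(1,2)])
qed

lemma heckeTinv_eq:
  fixes st :: "'a::field_char_0"
  assumes st: "st \<noteq> 0"
  shows "heckeTinv st i f = heckeT st i f - lconst (st - inverse st) * f"
  unfolding heckeTinv_def
proof (rule the_equality)
  show "heckeT st i (heckeT st i f - lconst (st - inverse st) * f) = f"
    by (simp add: heckeT_diff_lconst_mult heckeT_quadratic[OF st])
next
  fix g assume "heckeT st i g = f"
  then show "g = heckeT st i f - lconst (st - inverse st) * f"
    using heckeT_quadratic[OF st, of i g] by simp
qed

lemma heckeT_heckeTinv: "st \<noteq> 0 \<Longrightarrow> heckeT st i (heckeTinv st i f) = (f :: 'a::field_char_0 laurent)"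
  by (simp add: heckeTinv_eq heckeT_diff_lconst_mult heckeT_quadratic)

lemma heckeTinv_heckeT: "st \<noteq> 0 \<Longrightarrow> heckeTinv st i (heckeT st i f) = (f :: 'a::field_char_0 laurent)"
  by (simp add: heckeTinv_eq heckeT_quadratic)

definition wheel_chain ::
    "'a::field \<Rightarrow> 'a \<Rightarrow> nat \<Rightarrow> nat \<Rightarrow> nat \<Rightarrow> (nat \<Rightarrow> 'a) \<Rightarrow> (nat \<Rightarrow> nat) \<Rightarrow> (nat \<Rightarrow> nat) \<Rightarrow> bool" where
  "wheel_chain t q n k r z ii s \<longleftrightarrow> (\<forall>a\<in>{1..k+1}. ii a \<in> {1..n}) \<and> inj_on ii {1..k+1} \<and>
     (\<forall>a\<in>{1..k}. z (ii (a + 1)) = z (ii a) * t * q ^ s a \<and> (s a = 0 \<longrightarrow> ii a < ii (a + 1))) \<and>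
     (\<Sum>a=1..k. s a) \<le> r - 2"

definition wheel_points :: "'a::field \<Rightarrow> 'a \<Rightarrow> nat \<Rightarrow> nat \<Rightarrow> nat \<Rightarrow> (nat \<Rightarrow> 'a) set" where
  "wheel_points t q n k r = {z. (\<forall>j\<in>{1..n}. z j \<noteq> 0) \<and> (\<exists>ii s. wheel_chain t q n k r z ii s)}"

lemma wheel_chain_cong:
  assumes "\<forall>j\<in>{1..n}. z' j = z j"
  shows "wheel_chain t q n k r z' ii s \<longleftrightarrow> wheel_chain t q n k r z ii s"
proof -
  have "(\<forall>a\<in>{1..k+1}. ii a \<in> {1..n}) \<Longrightarrow> \<forall>a\<in>{1..k}. z' (ii (a + 1)) = z (ii (a + 1)) \<and> z' (ii a) = z (ii a)"
    using assms by auto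
  then show ?thesis
    unfolding wheel_chain_def by (auto simp del: atLeastAtMost_iff)
qed

lemma wheel_points_cong:
  assumes "\<forall>j\<in>{1..n}. z' j = z j"
  shows "z' \<in> wheel_points t q n k r \<longleftrightarrow> z \<in> wheel_points t q n k r"
proof -
  have "wheel_chain t q n k r z' = wheel_chain t q n k r z"
    using wheel_chain_cong[OF assms] by (intro ext)
  then show ?thesis
    using assms by (simp add: wheel_points_def)
qed

lemma wheel_chainI:
  assumes "\<And>a. a \<in> {1..k+1} \<Longrightarrow> ii a \<in> {1..n}" "inj_on ii {1..k+1}"
    and "\<And>a. a \<in> {1..k} \<Longrightarrow> z (ii (a + 1)) = z (ii a) * t * q ^ s a"
    and "\<And>a. a \<in> {1..k} \<Longrightarrow> s a = 0 \<Longrightarrow> ii a < ii (a + 1)"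
    and "(\<Sum>a=1..k. s a) \<le> r - 2"
  shows "wheel_chain t q n k r z ii s"
  using assms by (simp add: wheel_chain_def)

lemma wheel_chainD:
  assumes "wheel_chain t q n k r z ii s"
  shows "\<And>a. a \<in> {1..k+1} \<Longrightarrow> ii a \<in> {1..n}" "inj_on ii {1..k+1}"
    and "\<And>a. a \<in> {1..k} \<Longrightarrow> z (ii (a + 1)) = z (ii a) * t * q ^ s a"
    and "\<And>a. a \<in> {1..k} \<Longrightarrow> s a = 0 \<Longrightarrow> ii a < ii (a + 1)"
    and "(\<Sum>a=1..k. s a) \<le> r - 2"
  using assms by (auto simp: wheel_chain_def)

lemma wheel_chain_value:
  assumes c: "wheel_chain t q n k r z ii s" and "1 \<le> a" "a + m \<le> k + 1"
  shows "z (ii (a + m)) = z (ii a) * t ^ m * q ^ (\<Sum>b\<in>{a..<a+m}. s b)"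
  using assms(3)
proof (induction m)
  case (Suc m)
  then have "z (ii (a + m + 1)) = z (ii (a + m)) * t * q ^ s (a + m)"
    using wheel_chainD(3)[OF c] \<open>1 \<le> a\<close> by simp
  with Suc show ?case
    by (simp add: power_add mult_ac)
qed simp

lemma wheel_chain_swap:
  assumes c: "wheel_chain t q n k r z ii s" and i: "1 \<le> i" "i < n"
    and not_tight: "\<not> (\<exists>a\<in>{1..k}. ii a = i \<and> ii (a + 1) = i + 1 \<and> s a = 0)"
  shows "wheel_chain t q n k r (z \<circ> transpose i (i + 1)) (transpose i (i + 1) \<circ> ii) s"
  unfolding wheel_chain_def
proof (intro conjI ballI)
  fix a assume "a \<in> {1..k+1}"
  then show "(transpose i (i + 1) \<circ> ii) a \<in> {1..n}"
    using c i unfolding wheel_chain_def by (auto simp: transpose_def)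
next
  show "inj_on (transpose i (i + 1) \<circ> ii) {1..k+1}"
    using c unfolding wheel_chain_def by (auto intro: comp_inj_on inj_on_subset[OF inj_transpose])
next
  fix a assume a: "a \<in> {1..k}"
  then show "(z \<circ> transpose i (i + 1)) ((transpose i (i + 1) \<circ> ii) (a + 1))
      = (z \<circ> transpose i (i + 1)) ((transpose i (i + 1) \<circ> ii) a) * t * q ^ s a"
    using c unfolding wheel_chain_def by simp
  show "s a = 0 \<longrightarrow> (transpose i (i + 1) \<circ> ii) a < (transpose i (i + 1) \<circ> ii) (a + 1)"
  proof
    assume "s a = 0"
    then have "ii a < ii (a + 1)" "\<not> (ii a = i \<and> ii (a + 1) = i + 1)"
      using c a not_tight unfolding wheel_chain_def by auto
    then show "(transpose i (i + 1) \<circ> ii) a < (transpose i (i + 1) \<circ> ii) (a + 1)"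
      by (auto simp: transpose_def)
  qed
next
  show "(\<Sum>a=1..k. s a) \<le> r - 2"
    using c unfolding wheel_chain_def by simp
qed

lemma wheel_chain_fun_upd:
  assumes "wheel_chain t q n k r z ii s" "j \<notin> ii ` {1..k+1}"
  shows "wheel_chain t q n k r (z(j := y)) ii s"
proof -
  have "\<forall>a\<in>{1..k}. (z(j := y)) (ii (a + 1)) = z (ii (a + 1)) \<and> (z(j := y)) (ii a) = z (ii a)"
    using assms(2) by auto
  then show ?thesis
    using assms(1) unfolding wheel_chain_def by auto
qed

lemma sum_transfer_le:
  fixes s s' e :: "nat \<Rightarrow> nat"
  assumes "\<And>a. a \<in> {1..k} \<Longrightarrow> s' a + e a = s a + e (a + 1)" and "e (k + 1) = 0"
  shows "(\<Sum>a=1..k. s' a) \<le> (\<Sum>a=1..k. s a)"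
proof -
  have "(\<Sum>a=1..k. e (a + 1)) = (\<Sum>a=2..k+1. e a)"
    using sum.shift_bounds_cl_Suc_ivl[of e 1 k] by (simp add: numeral_2_eq_2)
  also have "\<dots> \<le> (\<Sum>a=1..k. e a)"
    using assms(2) by (simp add: sum_mono2)
  finally have "(\<Sum>a=1..k. e (a + 1)) \<le> (\<Sum>a=1..k. e a)" .
  moreover have "(\<Sum>a=1..k. s' a) + (\<Sum>a=1..k. e a) = (\<Sum>a=1..k. s a) + (\<Sum>a=1..k. e (a + 1))"
    unfolding sum.distrib[symmetric] by (intro sum.cong refl) (rule assms(1))
  ultimately show ?thesis
    by linarith
qed

text \<open>If the chain does not end at \<open>n\<close>, shifting its indices cyclically gives a chain of the
  rotated point: the factor \<open>q\<close> acquired by \<open>z\<^sub>n\<close> moves one unit of \<open>q\<close>-exponent from the link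
  leaving \<open>n\<close> to the link entering it.\<close>

lemma wheel_chain_omega_shift:
  assumes n: "n \<ge> 2" and c: "wheel_chain t q n k r z ii s" and last: "ii (k + 1) \<noteq> n"
  defines "e \<equiv> \<lambda>a. if ii a = n then 1 else 0 :: nat"
  shows "wheel_chain t q n k r (omega_point q n z) (cyc_succ n \<circ> ii) (\<lambda>a. s a + e (a + 1) - e a)"
proof -
  let ?s' = "\<lambda>a. s a + e (a + 1) - e a"
  note rng = wheel_chainD(1)[OF c] and inj = wheel_chainD(2)[OF c]
    and step = wheel_chainD(3)[OF c] and order = wheel_chainD(4)[OF c]
  have w: "omega_point q n z (cyc_succ n (ii a)) = q ^ e a * z (ii a)" if "a \<in> {1..k+1}" for a
    using omega_point_cyc_succ[OF n rng[OF that], of q z] by (simp add: e_def)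
  have leaves_n: "ii (a + 1) \<noteq> n \<and> s a \<noteq> 0" if "a \<in> {1..k}" "ii a = n" for a
    using that rng[of "a + 1"] order[of a] inj_onD[OF inj, of a "a + 1"] by force
  then have balance: "?s' a + e a = s a + e (a + 1)" if "a \<in> {1..k}" for a
    using that by (auto simp: e_def)
  show ?thesis
  proof (rule wheel_chainI)
    show "(cyc_succ n \<circ> ii) a \<in> {1..n}" if "a \<in> {1..k+1}" for a
      using cyc_succ_mem[OF rng[OF that]] by simp
    show "inj_on (cyc_succ n \<circ> ii) {1..k+1}"
      using inj inj_on_subset[OF inj_cyc_succ] n by (intro comp_inj_on) auto
  next
    fix a assume a: "a \<in> {1..k}"
    then have a1: "a \<in> {1..k+1}" "a + 1 \<in> {1..k+1}"
      by auto
    have "q ^ e (a + 1) * q ^ s a = q ^ e a * q ^ ?s' a"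
      unfolding power_add[symmetric] using balance[OF a] by (simp add: add.commute)
    then show "omega_point q n z ((cyc_succ n \<circ> ii) (a + 1))
        = omega_point q n z ((cyc_succ n \<circ> ii) a) * t * q ^ ?s' a"
      unfolding comp_apply w[OF a1(2)] w[OF a1(1)] step[OF a] by (simp only: mult_ac)
    assume "?s' a = 0"
    then show "(cyc_succ n \<circ> ii) a < (cyc_succ n \<circ> ii) (a + 1)"
      using leaves_n[OF a] order[OF a] rng[OF a1(1)] rng[OF a1(2)]
      by (cases "ii a = n"; cases "ii (a + 1) = n") (auto simp: e_def cyc_succ_def)
  next
    have "(\<Sum>a=1..k. ?s' a) \<le> (\<Sum>a=1..k. s a)"
      using last by (intro sum_transfer_le[where e = e, OF balance]) (simp_all add: e_def)
    then show "(\<Sum>a=1..k. ?s' a) \<le> r - 2"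
      using wheel_chainD(5)[OF c] by linarith
  qed
qed

definition chain_rot :: "nat \<Rightarrow> nat \<Rightarrow> nat" where
  "chain_rot k a = (if a = 1 then k + 1 else a - 1)"

lemma chain_rot_image: "chain_rot k ` {1..k+1} \<subseteq> {1..k+1}"
  by (auto simp: chain_rot_def)

lemma inj_on_chain_rot: "inj_on (chain_rot k) {1..k+1}"
  by (rule inj_onI) (auto simp: chain_rot_def split: if_splits)

lemma sum_rotate_le:
  fixes s :: "nat \<Rightarrow> nat"
  shows "(\<Sum>a=1..k. if a = 1 then x else s (a - 1)) \<le> x + (\<Sum>a=1..k. s a)"
proof (cases k)
  case (Suc m)
  have "(\<Sum>a=1..k. if a = 1 then x else s (a - 1)) = x + (\<Sum>a=Suc 1..Suc m. s (a - 1))"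
    using Suc by (simp add: sum.atLeast_Suc_atMost)
  also have "(\<Sum>a=Suc 1..Suc m. s (a - 1)) \<le> (\<Sum>a=1..k. s a)"
    unfolding sum.shift_bounds_cl_Suc_ivl using Suc by (simp add: sum_mono2)
  finally show ?thesis
    by simp
qed simp

text \<open>If the chain ends at \<open>n\<close>, the rotated point has a chain starting at \<open>1\<close>, the new position of
  \<open>z\<^sub>n\<close>. Its first link closes up because \<open>t\<^sup>k\<^sup>+\<^sup>1 q\<^sup>r\<^sup>-\<^sup>1 = 1\<close>.\<close>

lemma wheel_chain_omega_first_link:
  assumes r: "r \<ge> 2" and closes: "t ^ (k + 1) * q ^ (r - 1) = 1" and k: "k \<ge> 1"
    and c: "wheel_chain t q n k r z ii s" and last: "ii (k + 1) = n"
  shows "omega_point q n z 1 * t * q ^ (r - 2 - (\<Sum>a=1..k. s a)) = z (ii 1)"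
proof -
  let ?S = "\<Sum>a=1..k. s a"
  have "z n = z (ii 1) * t ^ k * q ^ ?S"
    using wheel_chain_value[OF c, of 1 k] last by (simp add: atLeastLessThanSuc_atLeastAtMost)
  moreover have "r - 1 = Suc (?S + (r - 2 - ?S))"
    using r wheel_chainD(5)[OF c] by simp
  then have "q ^ (r - 1) = q * q ^ ?S * q ^ (r - 2 - ?S)"
    by (simp only: power_add power_Suc mult.assoc)
  ultimately have "omega_point q n z 1 * t * q ^ (r - 2 - ?S) = z (ii 1) * (t ^ (k + 1) * q ^ (r - 1))"
    by (simp add: omega_point_def cyc_pred_def mult_ac)
  then show ?thesis
    unfolding closes by simp
qed

lemma wheel_chain_omega_rotate:
  assumes n: "n \<ge> 2" and r: "r \<ge> 2" and closes: "t ^ (k + 1) * q ^ (r - 1) = 1"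
    and c: "wheel_chain t q n k r z ii s" and last: "ii (k + 1) = n"
  defines "S \<equiv> \<Sum>a=1..k. s a"
  shows "wheel_chain t q n k r (omega_point q n z) (cyc_succ n \<circ> ii \<circ> chain_rot k)
    (\<lambda>a. if a = 1 then r - 2 - S else s (a - 1))"
proof -
  let ?ii = "cyc_succ n \<circ> ii \<circ> chain_rot k" and ?s = "\<lambda>a. if a = 1 then r - 2 - S else s (a - 1)"
  note rng = wheel_chainD(1)[OF c] and inj = wheel_chainD(2)[OF c]
    and step = wheel_chainD(3)[OF c] and order = wheel_chainD(4)[OF c]
  have below_n: "1 \<le> ii a \<and> ii a < n" if "a \<in> {1..k}" for a
    using that rng[of a] inj_onD[OF inj, of a "k + 1"] last by force
  have w: "omega_point q n z (cyc_succ n (ii a)) = z (ii a)" if "a \<in> {1..k}" for a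
    using below_n[OF that] omega_point_cyc_succ[OF n, of "ii a" q z] by simp
  have ii_first: "?ii 1 = 1" "?ii 2 = ii 1 + 1" if "k \<ge> 1"
    using last below_n[of 1] that by (auto simp: chain_rot_def cyc_succ_def)
  have ii_later: "?ii a = ii (a - 1) + 1" "?ii (a + 1) = ii a + 1" if "a \<in> {2..k}" for a
  proof -
    have "a \<in> {1..k}" "a - 1 \<in> {1..k}" "a \<noteq> 1" "a + 1 \<noteq> 1"
      using that by auto
    then have "ii a \<noteq> n" "ii (a - 1) \<noteq> n" "1 \<le> ii a" "ii a < n" "1 \<le> ii (a - 1)" "ii (a - 1) < n"
      using below_n[of a] below_n[of "a - 1"] by auto
    with \<open>a \<noteq> 1\<close> \<open>a + 1 \<noteq> 1\<close> show "?ii a = ii (a - 1) + 1" "?ii (a + 1) = ii a + 1"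
      by (simp_all add: chain_rot_def cyc_succ_def)
  qed
  show ?thesis
  proof (rule wheel_chainI)
    show "?ii a \<in> {1..n}" if "a \<in> {1..k+1}" for a
    proof -
      have "chain_rot k a \<in> {1..k+1}"
        using chain_rot_image that by blast
      then show ?thesis
        using rng cyc_succ_mem by simp
    qed
    have "inj_on (ii \<circ> chain_rot k) {1..k+1}"
      by (rule comp_inj_on[OF inj_on_chain_rot inj_on_subset[OF inj chain_rot_image]])
    moreover have "inj_on (cyc_succ n) ((ii \<circ> chain_rot k) ` {1..k+1})"
      using inj_cyc_succ[of n] n by (auto intro: inj_on_subset)
    ultimately show "inj_on ?ii {1..k+1}"
      by (simp add: comp_inj_on o_assoc[symmetric])
  next
    fix a assume a: "a \<in> {1..k}"
    show "omega_point q n z (?ii (a + 1)) = omega_point q n z (?ii a) * t * q ^ ?s a"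
    proof (cases "a = 1")
      case True
      then show ?thesis
        using wheel_chain_omega_first_link[OF r closes _ c last] w[OF a] ii_first a
        by (simp add: S_def chain_rot_def)
    next
      case False
      then have "a \<in> {2..k}" "a - 1 \<in> {1..k}"
        using a by auto
      then show ?thesis
        using w[OF a] w[of "a - 1"] step[of "a - 1"] by (simp add: chain_rot_def)
    qed
    show "?ii a < ?ii (a + 1)" if "?s a = 0"
    proof (cases "a = 1")
      case False
      then have "a \<in> {2..k}" "a - 1 \<in> {1..k}"
        using a by auto
      then show ?thesis
        using ii_later that order[of "a - 1"] False by simp
    qed (use ii_first below_n[of 1] a in \<open>simp add: numeral_2_eq_2\<close>)
  next
    show "(\<Sum>a=1..k. ?s a) \<le> r - 2"
      using sum_rotate_le[where x = "r - 2 - S" and s = s and k = k] wheel_chainD(5)[OF c] by (simp add: S_def)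
  qed
qed

definition reverse_point :: "nat \<Rightarrow> (nat \<Rightarrow> 'a::field) \<Rightarrow> nat \<Rightarrow> 'a" where
  "reverse_point n z j = inverse (z (n + 1 - j))"

lemma inj_on_nat_reflect: "inj_on (\<lambda>j. m - j) {..m :: nat}"
  by (rule inj_onI) (metis atMost_iff diff_diff_cancel)

lemma wheel_chain_reverse:
  assumes c: "wheel_chain t q n k r z ii s" and nz: "\<forall>j\<in>{1..n}. z j \<noteq> 0"
  shows "wheel_chain t q n k r (reverse_point n z) ((\<lambda>j. n + 1 - j) \<circ> ii \<circ> (\<lambda>a. k + 2 - a))
    (\<lambda>a. s (k + 1 - a))"
proof -
  let ?m = "\<lambda>a. k + 2 - a"
  note rng = wheel_chainD(1)[OF c]
  have mirror: "?m ` {1..k+1} \<subseteq> {1..k+1}"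
    by auto
  have reflected: "reverse_point n z (n + 1 - ii b) = inverse (z (ii b))" if "b \<in> {1..k+1}" for b
    using rng[OF that] by (simp add: reverse_point_def)
  show ?thesis
  proof (rule wheel_chainI)
    show "((\<lambda>j. n + 1 - j) \<circ> ii \<circ> ?m) a \<in> {1..n}" if "a \<in> {1..k+1}" for a
    proof -
      have "ii (?m a) \<in> {1..n}"
        using mirror that by (intro rng) blast
      then show ?thesis
        by auto
    qed
    have "inj_on ?m {1..k+1}"
      by (rule inj_on_subset[OF inj_on_nat_reflect]) auto
    then have "inj_on (ii \<circ> ?m) {1..k+1}"
      using inj_on_subset[OF wheel_chainD(2)[OF c] mirror] by (rule comp_inj_on)
    moreover have "inj_on (\<lambda>j. n + 1 - j) ((ii \<circ> ?m) ` {1..k+1})"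
      by (rule inj_on_subset[OF inj_on_nat_reflect]) (use rng mirror in force)
    ultimately show "inj_on ((\<lambda>j. n + 1 - j) \<circ> ii \<circ> ?m) {1..k+1}"
      by (simp add: comp_inj_on o_assoc[symmetric])
  next
    fix a assume a: "a \<in> {1..k}"
    define b where "b = k + 1 - a"
    have b: "b \<in> {1..k}" "b \<in> {1..k+1}" "b + 1 \<in> {1..k+1}" "?m (a + 1) = b" "?m a = b + 1" "k + 1 - a = b"
      using a by (auto simp: b_def)
    have step: "z (ii (b + 1)) = z (ii b) * t * q ^ s b"
      by (rule wheel_chainD(3)[OF c b(1)])
    moreover have "z (ii (b + 1)) \<noteq> 0"
      using nz rng[OF b(3)] by blast
    ultimately show "reverse_point n z (((\<lambda>j. n + 1 - j) \<circ> ii \<circ> ?m) (a + 1))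
        = reverse_point n z (((\<lambda>j. n + 1 - j) \<circ> ii \<circ> ?m) a) * t * q ^ s (k + 1 - a)"
      unfolding comp_apply b(4-6) reflected[OF b(2)] reflected[OF b(3)] by (simp add: field_simps)
    assume "s (k + 1 - a) = 0"
    then have "ii b < ii (b + 1)"
      using wheel_chainD(4)[OF c b(1)] b(6) by simp
    then show "((\<lambda>j. n + 1 - j) \<circ> ii \<circ> ?m) a < ((\<lambda>j. n + 1 - j) \<circ> ii \<circ> ?m) (a + 1)"
      unfolding comp_apply b(4,5) using rng[OF b(3)] by simp
  next
    show "(\<Sum>a=1..k. s (k + 1 - a)) \<le> r - 2"
      using wheel_chainD(5)[OF c] sum.atLeastAtMost_rev[of s 1 k] by simp
  qed
qed

lemma reverse_point_mem_wheel_points: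
  assumes "z \<in> wheel_points t q n k r"
  shows "reverse_point n z \<in> wheel_points t q n k r"
proof -
  obtain ii s where c: "wheel_chain t q n k r z ii s" and nz: "\<forall>j\<in>{1..n}. z j \<noteq> 0"
    using assms by (auto simp: wheel_points_def)
  have "\<forall>j\<in>{1..n}. reverse_point n z j \<noteq> 0"
  proof
    fix j assume "j \<in> {1..n}"
    then have "n + 1 - j \<in> {1..n}"
      by auto
    then show "reverse_point n z j \<noteq> 0"
      using nz by (simp add: reverse_point_def)
  qed
  then show ?thesis
    using wheel_chain_reverse[OF c nz] by (auto simp: wheel_points_def)
qed

lemma omega_point_mem_wheel_points:
  assumes n: "n \<ge> 2" and r: "r \<ge> 2" and q: "q \<noteq> 0" and closes: "t ^ (k + 1) * q ^ (r - 1) = 1"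
    and z: "z \<in> wheel_points t q n k r"
  shows "omega_point q n z \<in> wheel_points t q n k r"
proof -
  obtain ii s where c: "wheel_chain t q n k r z ii s" and nz: "\<forall>j\<in>{1..n}. z j \<noteq> 0"
    using z by (auto simp: wheel_points_def)
  have "\<forall>j\<in>{1..n}. omega_point q n z j \<noteq> 0"
  proof
    fix j assume "j \<in> {1..n}"
    then have "cyc_pred n j \<in> {1..n}"
      by (auto simp: cyc_pred_def)
    then show "omega_point q n z j \<noteq> 0"
      using nz q by (simp add: omega_point_def)
  qed
  moreover have "\<exists>ii' s'. wheel_chain t q n k r (omega_point q n z) ii' s'"
    using wheel_chain_omega_shift[OF n c] wheel_chain_omega_rotate[OF n r closes c]
    by (cases "ii (k + 1) = n") blast+
  ultimately show ?thesis
    by (simp add: wheel_points_def)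
qed

text \<open>\<open>\<omega>\<^sup>-\<^sup>1\<close> is \<open>\<omega>\<close> conjugated by the reversal \<open>z \<mapsto> (z\<^sub>n\<^sup>-\<^sup>1, \<dots>, z\<^sub>1\<^sup>-\<^sup>1)\<close>, which preserves wheels.\<close>

lemma omega_inv_point_mem_wheel_points:
  assumes "n \<ge> 2" "r \<ge> 2" "q \<noteq> 0" "t ^ (k + 1) * q ^ (r - 1) = 1"
    and "z \<in> wheel_points t q n k r"
  shows "omega_inv_point q n z \<in> wheel_points t q n k r"
proof -
  have "\<forall>j\<in>{1..n}. omega_inv_point q n z j = reverse_point n (omega_point q n (reverse_point n z)) j"
  proof
    fix j assume j: "j \<in> {1..n}"
    show "omega_inv_point q n z j = reverse_point n (omega_point q n (reverse_point n z)) j"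
    proof (cases "j = n")
      case False
      then have "n + 1 - j \<noteq> 1" "2 \<le> n + 1 - j" "n + 1 - j \<le> n" "n + 1 - (n + 1 - j - 1) = j + 1"
        using j by auto
      then show ?thesis
        using False j by (simp add: omega_inv_point_def reverse_point_def omega_point_def cyc_pred_def cyc_succ_def)
    qed (use assms(1) in \<open>simp add: omega_inv_point_def reverse_point_def omega_point_def cyc_pred_def
      cyc_succ_def\<close>)
  qed
  moreover have "reverse_point n (omega_point q n (reverse_point n z)) \<in> wheel_points t q n k r"
    using assms by (intro reverse_point_mem_wheel_points omega_point_mem_wheel_points)
  ultimately show ?thesis
    using wheel_points_cong by blast
qed

definition vanishing_ideal :: "nat \<Rightarrow> (nat \<Rightarrow> 'a::field) set \<Rightarrow> 'a laurent set" where
  "vanishing_ideal n Z = {f \<in> laurentV n. \<forall>z\<in>Z. leval z f = 0}"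

text \<open>Only the coordinates \<open>1..n\<close> of a wheel point matter, so the others may be taken nonzero.\<close>

lemma vanishing_ideal_wheel_points_memI:
  assumes "g \<in> laurentV n"
    and zeros: "\<And>z. z \<in> wheel_points t q n k r \<Longrightarrow> \<forall>j. z j \<noteq> 0 \<Longrightarrow> leval z g = 0"
  shows "g \<in> vanishing_ideal n (wheel_points t q n k r)"
  unfolding vanishing_ideal_def
proof (intro CollectI conjI ballI)
  fix z assume z: "z \<in> wheel_points t q n k r"
  define z' where "z' j = (if j \<in> {1..n} then z j else 1)" for j
  have "z' \<in> wheel_points t q n k r"
    using z wheel_points_cong[of n z' z] by (simp add: z'_def)
  moreover have "\<forall>j. z' j \<noteq> 0"
    using z by (auto simp: z'_def wheel_points_def)
  moreover have "\<forall>\<alpha>\<in>Poly_Mapping.keys g. \<forall>i\<in>Poly_Mapping.keys \<alpha>. i \<in> {1..n}"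
    using assms(1) unfolding laurentV_def by blast
  then have "leval z' g = leval z g"
    by (intro leval_cong) (simp add: z'_def)
  ultimately show "leval z g = 0"
    using zeros by metis
qed (rule assms(1))

lemma monom_eval_fun_upd:
  "monom_eval (z(j := y)) \<alpha> = monom_eval (z(j := 1)) \<alpha> * y powi Poly_Mapping.lookup \<alpha> j"
proof -
  let ?S = "Poly_Mapping.keys \<alpha> \<union> {j}"
  have split: "(\<Prod>i\<in>?S. (z(j := w)) i powi Poly_Mapping.lookup \<alpha> i)
      = w powi Poly_Mapping.lookup \<alpha> j * (\<Prod>i\<in>?S - {j}. z i powi Poly_Mapping.lookup \<alpha> i)" for w
  proof -
    have "(\<Prod>i\<in>?S - {j}. (z(j := w)) i powi Poly_Mapping.lookup \<alpha> i)
        = (\<Prod>i\<in>?S - {j}. z i powi Poly_Mapping.lookup \<alpha> i)"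
      by (rule prod.cong) auto
    then show ?thesis
      by (subst prod.remove[of _ j]) auto
  qed
  have "monom_eval (z(j := w)) \<alpha> = (\<Prod>i\<in>?S. (z(j := w)) i powi Poly_Mapping.lookup \<alpha> i)" for w
    by (rule monom_eval_superset) auto
  then show ?thesis
    by (simp only: split power_int_1_left mult_1_left mult.commute)
qed

lemma leval_fun_upd_eq_0:
  fixes g :: "'a::field_char_0 laurent"
  assumes "finite F" and zeros: "\<And>y. y \<noteq> 0 \<Longrightarrow> y \<notin> F \<Longrightarrow> leval (z(j := y)) g = 0" and "y \<noteq> 0"
  shows "leval (z(j := y)) g = 0"
proof -
  let ?c = "\<lambda>\<alpha>. Poly_Mapping.lookup g \<alpha> * monom_eval (z(j := 1)) \<alpha>"
  have eval: "leval (z(j := w)) g = (\<Sum>\<alpha>\<in>Poly_Mapping.keys g. ?c \<alpha> * w powi Poly_Mapping.lookup \<alpha> j)" for w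
    unfolding leval_monom_eval monom_eval_fun_upd[of z j w] by (simp only: mult.assoc)
  have Y: "infinite (UNIV - insert 0 F)" "0 \<notin> UNIV - insert 0 F"
    by (simp_all add: Diff_infinite_finite assms(1) infinite_UNIV_char_0)
  have "(\<Sum>\<alpha>\<in>Poly_Mapping.keys g. ?c \<alpha> * w powi Poly_Mapping.lookup \<alpha> j) = 0"
    if "w \<in> UNIV - insert 0 F" for w
  proof -
    have "leval (z(j := w)) g = 0"
      using that by (intro zeros) auto
    then show ?thesis
      by (simp only: eval)
  qed
  from powi_sum_eq_0_if_infinite_zeros_eval[OF finite_keys Y this assms(3)] show ?thesis
    by (simp only: eval)
qed

lemma foldr_closed:
  assumes "\<And>j g. j \<in> set xs \<Longrightarrow> g \<in> P \<Longrightarrow> F j g \<in> P" "f \<in> P"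
  shows "foldr F xs f \<in> P"
  using assms by (induction xs) auto

lemma foldr_rev_cancel:
  assumes "\<And>j h. G j (F j h) = h"
  shows "foldr G xs (foldr F (rev xs) h) = h"
  using assms by (induction xs arbitrary: h) auto

lemma daha_Yinv_eq:
  fixes st q :: "'a::field_char_0"
  assumes n: "n \<ge> 2" and st: "st \<noteq> 0" and q: "q \<noteq> 0"
  shows "daha_Yinv st q n i f
    = foldr (heckeT st) (rev [1..<i]) (omega_inv q n (foldr (heckeTinv st) (rev [i..<n]) f))"
  unfolding daha_Yinv_def
proof (rule the_equality)
  show "daha_Y st q n i (foldr (heckeT st) (rev [1..<i]) (omega_inv q n (foldr (heckeTinv st) (rev [i..<n]) f))) = f"
    unfolding daha_Y_def
    by (simp add: foldr_rev_cancel heckeTinv_heckeT[OF st] heckeT_heckeTinv[OF st] omega_omega_inv[OF n q])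
next
  fix g assume "daha_Y st q n i g = f"
  moreover have "foldr (heckeT st) (rev [1..<i]) (omega_inv q n (foldr (heckeTinv st) (rev [i..<n])
      (daha_Y st q n i g))) = g"
    unfolding daha_Y_def
    using foldr_rev_cancel[of "heckeTinv st" "heckeT st" "rev [i..<n]"]
      foldr_rev_cancel[of "heckeT st" "heckeTinv st" "rev [1..<i]"]
    by (simp add: heckeTinv_heckeT[OF st] heckeT_heckeTinv[OF st] omega_omega_inv[OF n q])
  ultimately show "g = foldr (heckeT st) (rev [1..<i]) (omega_inv q n (foldr (heckeTinv st) (rev [i..<n]) f))"
    by simp
qed

lemma hecke_tight_coefficient:
  fixes st :: "'a::field"
  assumes "st \<noteq> 0" "st ^ 2 \<noteq> 1"
  shows "st + (st - inverse st) / (inverse (st ^ 2) - 1) = 0"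
proof -
  have "inverse (st ^ 2) - 1 = (1 - st ^ 2) / st ^ 2" "1 - st ^ 2 \<noteq> 0"
    using assms by (auto simp: field_simps)
  then show ?thesis
    using assms by (simp add: field_simps power2_eq_square)
qed

locale wheel_parameters =
  fixes st q :: "'a::field_char_0" and k r :: nat
  assumes st_nonzero: "st \<noteq> 0"
    and r_ge_2: "r \<ge> 2"
    and wheel_closes: "(st ^ 2) ^ (k + 1) * q ^ (r - 1) = 1"
    and no_shorter_wheel: "\<And>m S. 1 \<le> m \<Longrightarrow> m \<le> k \<Longrightarrow> S \<le> r - 2 \<Longrightarrow> (st ^ 2) ^ m * q ^ S \<noteq> 1"
begin

abbreviation wheel :: "nat \<Rightarrow> (nat \<Rightarrow> 'a) set" where
  "wheel n \<equiv> wheel_points (st ^ 2) q n k r"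

abbreviation wheel_ideal :: "nat \<Rightarrow> 'a laurent set" where
  "wheel_ideal n \<equiv> vanishing_ideal n (wheel n)"

lemma q_nonzero: "q \<noteq> 0"
  using wheel_closes r_ge_2 by (cases "q = 0") (auto simp: power_0_left)

lemma wheel_chain_values_distinct:
  assumes c: "wheel_chain (st ^ 2) q n k r z ii s" and nz: "\<forall>j\<in>{1..n}. z j \<noteq> 0"
    and ab: "1 \<le> a" "a < b" "b \<le> k + 1"
  shows "z (ii a) \<noteq> z (ii b)"
proof
  assume eq: "z (ii a) = z (ii b)"
  define S where "S = (\<Sum>c\<in>{a..<b}. s c)"
  have "z (ii b) = z (ii a) * ((st ^ 2) ^ (b - a) * q ^ S)"
    using wheel_chain_value[OF c ab(1), of "b - a"] ab by (simp add: S_def mult.assoc)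
  moreover have "z (ii a) \<noteq> 0"
    using c nz ab unfolding wheel_chain_def by auto
  ultimately have "(st ^ 2) ^ (b - a) * q ^ S = 1"
    using eq by simp
  moreover have "S \<le> (\<Sum>c=1..k. s c)"
    unfolding S_def using ab by (intro sum_mono2) auto
  then have "S \<le> r - 2"
    using c unfolding wheel_chain_def by simp
  ultimately show False
    using no_shorter_wheel[of "b - a" S] ab by simp
qed

lemma heckeT_vanishes_at_separated:
  assumes f: "f \<in> wheel_ideal n" and i: "1 \<le> i" "i < n"
    and z: "z \<in> wheel n" "\<forall>j. z j \<noteq> 0" and ne: "z i \<noteq> z (i + 1)"
  shows "leval z (heckeT st i f) = 0"
proof -
  let ?z' = "z \<circ> transpose i (i + 1)"
  have fz: "leval z f = 0"
    using f z(1) by (simp add: vanishing_ideal_def)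
  obtain ii s where c: "wheel_chain (st ^ 2) q n k r z ii s"
    using z(1) by (auto simp: wheel_points_def)
  show ?thesis
  proof (cases "\<exists>a\<in>{1..k}. ii a = i \<and> ii (a + 1) = i + 1 \<and> s a = 0")
    case True
    then have "z (i + 1) = z i * st ^ 2"
      using c unfolding wheel_chain_def by fastforce
    moreover have "z i \<noteq> 0"
      using z(2) by simp
    ultimately have "z i / z (i + 1) = inverse (st ^ 2)" "st ^ 2 \<noteq> 1"
      using st_nonzero ne by (auto simp: divide_inverse)
    then have "leval z (heckeT st i f)
        = leval ?z' f * (st + (st - inverse st) / (inverse (st ^ 2) - 1))"
      using leval_heckeT[OF z(2) ne, of st f] fz by (simp add: algebra_simps)
    then show ?thesis
      using hecke_tight_coefficient[OF st_nonzero] \<open>st ^ 2 \<noteq> 1\<close> by simp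
  next
    case False
    then have "?z' \<in> wheel n"
      using wheel_chain_swap[OF c i False] z by (auto simp: wheel_points_def)
    then have "leval ?z' f = 0"
      using f by (simp add: vanishing_ideal_def)
    then show ?thesis
      using leval_heckeT[OF z(2) ne, of st f] fz by simp
  qed
qed

text \<open>If \<open>z\<^sub>i = z\<^sub>i\<^sub>+\<^sub>1\<close>, one of \<open>i, i + 1\<close> is not on the chain (chain values are distinct); moving that
  coordinate keeps \<open>z\<close> on the wheel and separates the two values, so the separated case and
  the one-variable identity theorem give the claim.\<close>

lemma heckeT_vanishes_at:
  assumes f: "f \<in> wheel_ideal n" and i: "1 \<le> i" "i < n" and z: "z \<in> wheel n" "\<forall>j. z j \<noteq> 0"
  shows "leval z (heckeT st i f) = 0"
proof (cases "z i = z (i + 1)")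
  case True
  obtain ii s where c: "wheel_chain (st ^ 2) q n k r z ii s" and nz: "\<forall>j\<in>{1..n}. z j \<noteq> 0"
    using z(1) by (auto simp: wheel_points_def)
  have "i \<notin> ii ` {1..k+1} \<or> i + 1 \<notin> ii ` {1..k+1}"
  proof (rule ccontr)
    assume "\<not> ?thesis"
    then obtain a b where "a \<in> {1..k+1}" "b \<in> {1..k+1}" "ii a = i" "ii b = i + 1"
      by auto
    then show False
      using wheel_chain_values_distinct[OF c nz] True by (cases a b rule: linorder_cases) force+
  qed
  then obtain j j' where j: "j \<notin> ii ` {1..k+1}" and jj': "j = i \<and> j' = i + 1 \<or> j = i + 1 \<and> j' = i"
    by blast
  have moved: "leval (z(j := y)) (heckeT st i f) = 0" if "y \<noteq> 0" "y \<notin> {z j'}" for y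
  proof (rule heckeT_vanishes_at_separated[OF f i])
    show "z(j := y) \<in> wheel n"
      using wheel_chain_fun_upd[OF c j] nz that by (auto simp: wheel_points_def)
    show "\<forall>l. (z(j := y)) l \<noteq> 0" "(z(j := y)) i \<noteq> (z(j := y)) (i + 1)"
      using z(2) that jj' by auto
  qed
  have "leval (z(j := z j)) (heckeT st i f) = 0"
    using z(2) by (intro leval_fun_upd_eq_0[where F = "{z j'}", OF _ moved]) auto
  then show ?thesis
    by simp
qed (rule heckeT_vanishes_at_separated[OF f i z])

lemma heckeT_mem_wheel_ideal:
  assumes "f \<in> wheel_ideal n" "1 \<le> i" "i < n"
  shows "heckeT st i f \<in> wheel_ideal n"
  using assms heckeT_vanishes_at
  by (intro vanishing_ideal_wheel_points_memI laurentV_heckeT) (auto simp: vanishing_ideal_def)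

lemma diff_lconst_mult_mem_wheel_ideal:
  assumes "f \<in> wheel_ideal n" "g \<in> wheel_ideal n"
  shows "f - lconst a * g \<in> wheel_ideal n"
  using assms
  by (intro vanishing_ideal_wheel_points_memI laurentV_diff laurentV_mult laurentV_lconst)
    (auto simp: vanishing_ideal_def leval_diff leval_mult)

lemma heckeTinv_mem_wheel_ideal:
  assumes "f \<in> wheel_ideal n" "1 \<le> i" "i < n"
  shows "heckeTinv st i f \<in> wheel_ideal n"
  unfolding heckeTinv_eq[OF st_nonzero]
  using assms by (intro diff_lconst_mult_mem_wheel_ideal heckeT_mem_wheel_ideal)

lemma lvar_mult_mem_wheel_ideal:
  assumes "f \<in> wheel_ideal n" "i \<in> {1..n}"
  shows "lvar i * f \<in> wheel_ideal n" "lvar_inv i * f \<in> wheel_ideal n"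
  using assms
  by (intro vanishing_ideal_wheel_points_memI laurentV_mult laurentV_lvar laurentV_lvar_inv;
      auto simp: vanishing_ideal_def leval_mult)+

lemma omega_mem_wheel_ideal:
  assumes "f \<in> wheel_ideal n" "n \<ge> 2"
  shows "omega q n f \<in> wheel_ideal n" "omega_inv q n f \<in> wheel_ideal n"
  using assms r_ge_2 q_nonzero wheel_closes
  by (auto simp: vanishing_ideal_def leval_omega leval_omega_inv laurentV_omega laurentV_omega_inv
      omega_point_mem_wheel_points omega_inv_point_mem_wheel_points)

lemma daha_Y_mem_wheel_ideal:
  assumes "f \<in> wheel_ideal n" "n \<ge> 2" "i \<in> {1..n}"
  shows "daha_Y st q n i f \<in> wheel_ideal n"
  unfolding daha_Y_def using assms
  by (intro foldr_closed omega_mem_wheel_ideal heckeT_mem_wheel_ideal heckeTinv_mem_wheel_ideal) auto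

lemma daha_Yinv_mem_wheel_ideal:
  assumes "f \<in> wheel_ideal n" "n \<ge> 2" "i \<in> {1..n}"
  shows "daha_Yinv st q n i f \<in> wheel_ideal n"
  unfolding daha_Yinv_eq[OF assms(2) st_nonzero q_nonzero] using assms
  by (intro foldr_closed omega_mem_wheel_ideal heckeT_mem_wheel_ideal heckeTinv_mem_wheel_ideal) auto

end

lemma Fract_power: "Fract (p :: 'a::idom) 1 ^ m = Fract (p ^ m) 1"
  by (induction m) (simp_all add: fract_collapse)

lemma wvar_power: "wvar ^ m = Fract (monom 1 m) 1"
  by (simp add: wvar_def Fract_power monom_power flip: monom_altdef[of 1 1, simplified])

lemma spec_tau_power: "spec_tau r ^ m = Fract (monom (cis (2 * pi / real (r - 1)) ^ m) 0) 1"
  by (simp add: spec_tau_def Fract_power monom_power flip: monom_0)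

lemma spec_tau_power_eq_1_iff:
  assumes "r \<ge> 2" "m < r - 1"
  shows "cis (2 * pi / real (r - 1)) ^ m = 1 \<longleftrightarrow> m = 0"
proof -
  have "cis (2 * pi / real (r - 1)) ^ m = cis (2 * pi * real m / real (r - 1))"
    by (simp add: DeMoivre mult_ac)
  moreover have "inj_on (\<lambda>j. cis (2 * pi * real j / real (r - 1))) {..<r - 1}"
    using bij_betw_roots_unity[of "r - 1"] assms(1) by (simp add: bij_betw_def)
  ultimately show ?thesis
    using assms inj_onD[of _ "{..<r - 1}" m 0] by fastforce
qed

lemma wvar_nonzero: "wvar \<noteq> 0"
  by (simp add: wvar_def Zero_fract_def eq_fract)

text \<open>With \<open>A = a/d\<close> and \<open>B = 2b/d\<close> in the notation of the definitions, \<open>t = w\<^sup>2\<^sup>A\<close> and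
  \<open>q = \<tau> w\<^sup>-\<^sup>B\<close>, and \<open>a (k + 1) = b (r - 1)\<close> because both equal \<open>(k + 1)(r - 1)/g\<close>.\<close>

lemma spec_exponents:
  assumes r: "r \<ge> 2"
  obtains A B where "A \<ge> 1" "2 * A * (k + 1) = B * (r - 1)"
    "\<And>m. (spec_st k r ^ 2) ^ m = wvar ^ (2 * A * m)"
    "\<And>S. spec_q k r ^ S * wvar ^ (B * S) = spec_tau r ^ S"
proof -
  define g where "g = gcd (k + 1) (r - 1)"
  define a b d where "a = spec_a k r" "b = spec_b k r" "d = spec_d k r"
  define A B where "A = a div d" "B = 2 * b div d"
  have ag: "a * g = r - 1" and bg: "b * g = k + 1"
    by (simp_all add: a_b_d_def g_def spec_a_def spec_b_def)
  have "a \<ge> 1"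
  proof (rule ccontr)
    assume "\<not> a \<ge> 1"
    then have "a = 0"
      by simp
    with ag r show False
      by simp
  qed
  then have d: "d > 0" "d dvd a" "d dvd 2 * b"
    by (simp_all add: a_b_d_def spec_d_def)
  then have "A \<ge> 1"
    using \<open>a \<ge> 1\<close> by (simp add: A_B_def div_greater_zero_iff dvd_imp_le Suc_le_eq)
  moreover have "a * (k + 1) = b * (r - 1)"
    unfolding ag[symmetric] bg[symmetric] by (simp only: mult_ac)
  with d have "2 * A * (k + 1) * d = B * (r - 1) * d"
    by (metis A_B_def dvd_div_mult_self mult.assoc mult.commute)
  then have "2 * A * (k + 1) = B * (r - 1)"
    using d(1) by simp
  moreover have "(spec_st k r ^ 2) ^ m = wvar ^ (2 * A * m)" for m
    by (simp add: A_B_def a_b_d_def spec_st_def mult.commute flip: power_mult)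
  moreover have "spec_q k r = spec_tau r * inverse wvar ^ B"
    by (simp add: A_B_def a_b_d_def spec_q_def)
  then have "spec_q k r * wvar ^ B = spec_tau r"
    using wvar_nonzero by (simp add: field_simps)
  then have "spec_q k r ^ S * wvar ^ (B * S) = spec_tau r ^ S" for S
    by (metis power_mult power_mult_distrib)
  ultimately show ?thesis
    using that by blast
qed

lemma spec_wheel_closes:
  assumes r: "r \<ge> 2"
  shows "(spec_st k r ^ 2) ^ (k + 1) * spec_q k r ^ (r - 1) = 1"
proof -
  obtain A B where AB: "2 * A * (k + 1) = B * (r - 1)"
    and st: "\<And>m. (spec_st k r ^ 2) ^ m = wvar ^ (2 * A * m)"
    and q: "\<And>S. spec_q k r ^ S * wvar ^ (B * S) = spec_tau r ^ S"
    using spec_exponents[OF r] by metis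
  have "cis (2 * pi / real (r - 1)) ^ (r - 1) = 1"
    using r by (simp add: DeMoivre)
  then have "spec_tau r ^ (r - 1) = 1"
    by (simp add: spec_tau_power monom_0 One_fract_def pCons_one)
  moreover have "(spec_st k r ^ 2) ^ (k + 1) * spec_q k r ^ (r - 1) = spec_tau r ^ (r - 1)"
    unfolding st AB q[symmetric] by (rule mult.commute)
  ultimately show ?thesis
    by simp
qed

text \<open>Comparing the two sides as monomials \<open>c w\<^sup>N\<close> forces \<open>\<tau>\<^sup>S = 1\<close>, i.e. \<open>S = 0\<close>, and then \<open>m = 0\<close>.\<close>

lemma spec_no_shorter_wheel:
  assumes r: "r \<ge> 2" and m: "1 \<le> m" and S: "S \<le> r - 2"
  shows "(spec_st k r ^ 2) ^ m * spec_q k r ^ S \<noteq> 1"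
proof
  obtain A B where A: "A \<ge> 1"
    and st: "\<And>m. (spec_st k r ^ 2) ^ m = wvar ^ (2 * A * m)"
    and q: "\<And>S. spec_q k r ^ S * wvar ^ (B * S) = spec_tau r ^ S"
    using spec_exponents[OF r] by metis
  let ?c = "cis (2 * pi / real (r - 1))"
  assume "(spec_st k r ^ 2) ^ m * spec_q k r ^ S = 1"
  then have "wvar ^ (2 * A * m) * spec_tau r ^ S = wvar ^ (B * S)"
    unfolding st q[symmetric] by (metis mult.assoc mult_1_left)
  then have "monom (?c ^ S) (2 * A * m) = monom 1 (B * S)"
    by (simp add: wvar_power spec_tau_power eq_fract mult_monom)
  then have "?c ^ S = 1" "2 * A * m = B * S"
    by (auto simp: monom_eq_iff')
  moreover have "S < r - 1"
    using S r by simp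
  ultimately have "S = 0"
    using spec_tau_power_eq_1_iff[OF r] by blast
  then show False
    using \<open>2 * A * m = B * S\<close> A m by simp
qed

lemma wheel_parameters_spec:
  assumes "r \<ge> 2"
  shows "wheel_parameters (spec_st k r) (spec_q k r) k r"
proof
  show "spec_st k r \<noteq> 0"
    by (simp add: spec_st_def wvar_nonzero)
qed (use assms spec_wheel_closes spec_no_shorter_wheel in blast)+

theorem proposition3p1:
  fixes n k r :: nat
  assumes "n \<ge> 2" and "1 \<le> k" and "k \<le> n - 1" and "r \<ge> 2"
  shows "\<forall>f\<in>idealI n k r.
     (\<forall>i\<in>{1..n}.
        lvar i * f \<in> idealI n k r \<and>
        lvar_inv i * f \<in> idealI n k r \<and>
        daha_Y (spec_st k r) (spec_q k r) n i f \<in> idealI n k r \<and>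
        daha_Yinv (spec_st k r) (spec_q k r) n i f \<in> idealI n k r) \<and>
     (\<forall>i\<in>{1..n-1}.
        heckeT (spec_st k r) i f \<in> idealI n k r \<and>
        heckeTinv (spec_st k r) i f \<in> idealI n k r)"
proof -
  interpret wheel_parameters "spec_st k r" "spec_q k r" k r
    using assms(4) by (rule wheel_parameters_spec)
  have "idealI n k r = wheel_ideal n"
    by (simp add: idealI_def vanishing_ideal_def wheelZ_def wheel_points_def wheel_chain_def spec_t_def)
  then show ?thesis
    using assms(1) lvar_mult_mem_wheel_ideal daha_Y_mem_wheel_ideal daha_Yinv_mem_wheel_ideal
      heckeT_mem_wheel_ideal heckeTinv_mem_wheel_ideal by auto
qed

end
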